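(* Let $p\in(0,1)$. The TBF $\mu'_p$ is consistent with a translation-invariant left interval-specification $\rho_p$ on $(\Omega',\mathscr F')$ whose single-site kernel at the origin depends only on $\omega'_0$ and on $n(\omega')$, namely $$\rho_{p,\{0\}}(\sigma_0=0\mid\omega')=g_p(n(\omega')),\qquad \rho_{p,\{0\}}(\sigma_0=1\mid\omega')=1-g_p(n(\omega')),$$ where $g_p(0)=0$, $g_p(1)=1-p$, and for $n\in\{2,3,\dots\}$ $$g_p(n)=\frac{(-1)^{n+1}|a|^n\frac{\lambda_{PF}}{1-\lambda_r}+\frac{\lambda_{PF}}{1-\lambda_{PF}}}{(-1)^n|a|^{n-1}\frac{1}{1-\lambda_r}+\frac{1}{1-\lambda_{PF}}},$$ and $g_p(\infty)=\lambda_{PF}$ (the value of the same formula with $|a|^\infty:=0$).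
   Context: Fix $p\in(0,1)$. Let $\Omega=\{0,1\}^{\mathbb{Z}}$ with product $\sigma$-algebra $\mathscr F$, $\mu_p=\mathrm{Ber}(p)^{\otimes\mathbb{Z}}$, $T:\Omega\to\Omega$, $(T\omega)_i=\omega_i\big(1-(1-\omega_{i-1})(1-\omega_{i+1})\big)$, $\Omega'=T(\Omega)$ (configurations in which every occupied site has an occupied neighbour), $\mathscr F'=\mathscr F\cap\Omega'$, and the TBF $\mu'_p=\mu_p\circ T^{-1}$. $\sigma_i$ denotes the spin at site $i$. Let $\lambda_{PF}=\tfrac12\big(1-p+\sqrt{(1-p)(3p+1)}\big)\in(0,1)$, $\lambda_r=\tfrac12\big(1-p-\sqrt{(1-p)(3p+1)}\big)\in(-\tfrac13,0)$ (the eigenvalues of the matrix $\begin{pmatrix}1-p&\sqrt{p(1-p)}\\ \sqrt{p(1-p)}&0\end{pmatrix}$), and $a=\lambda_r/\lambda_{PF}\in(-1,0)$. For $\omega'\in\Omega'$ let $n(\omega')=\min\{i\in\mathbb N:(\omega'_{-i-1},\omega'_{-i})=(1,1)\}$ (distance to the nearest pair of adjacent occupied sites in the past), with the conventions $n(\omega')=0$ if $(\omega'_{-2},\omega'_{-1})=(0,1)$ and $n(\omega')=\infty$ if no such pair exists. Left interval-specification (LIS): let $\mathcal S_b$ be the set of finite integer intervals; for $\Lambda\in\mathcal S_b$ write $l_\Lambda=\min\Lambda$, $m_\Lambda=\max\Lambda$, $\mathscr F_{\le x}$, $\mathscr F_{<x}$ for the $\sigma$-algebras generated by spins in $(-\infty,x]$,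 $(-\infty,x)$. A LIS is a family $(\rho_\Lambda)_{\Lambda\in\mathcal S_b}$ of probability kernels $\rho_\Lambda:\mathscr F_{\le m_\Lambda}\times\Omega'\to[0,1]$ such that $\rho_\Lambda(A\mid\cdot)$ is $\mathscr F_{<l_\Lambda}$-measurable, $\rho_\Lambda(B\mid\omega)=\mathbb 1_B(\omega)$ for $B\in\mathscr F_{<l_\Lambda}$, and $\rho_\Delta\rho_\Lambda f=\rho_\Delta f$ for $\Lambda\subset\Delta$ and $\mathscr F_{\le m_\Lambda}$-measurable $f$. A probability measure $\mu$ is consistent with $\rho$ if $\mu\rho_\Lambda(f)=\mu(f)$ for all $\Lambda\in\mathcal S_b$ and all $\mathscr F_{\le m_\Lambda}$-measurable $f$. A LIS is determined by its single-site kernels; translation invariance means $\rho_{\{i\}}$ is the shift of $\rho_{\{0\}}$. *)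

theory Defs
  imports "HOL-Probability.Probability"
begin

text \<open>Configurations: \<open>\<omega> :: int \<Rightarrow> bool\<close>, True = occupied (spin 1).\<close>

definition Mfull :: "(int \<Rightarrow> bool) measure" where
  "Mfull = PiM UNIV (\<lambda>_::int. count_space (UNIV::bool set))"

definition mu :: "real \<Rightarrow> (int \<Rightarrow> bool) measure" where
  "mu p = PiM UNIV (\<lambda>_::int. measure_pmf (bernoulli_pmf p))"

definition Tmap :: "(int \<Rightarrow> bool) \<Rightarrow> (int \<Rightarrow> bool)" where
  "Tmap \<omega> = (\<lambda>i. \<omega> i \<and> (\<omega> (i - 1) \<or> \<omega> (i + 1)))"

definition Omega' :: "(int \<Rightarrow> bool) set" where
  "Omega' = range Tmap"

definition F' :: "(int \<Rightarrow> bool) measure" where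
  "F' = restrict_space Mfull Omega'"

definition mu' :: "real \<Rightarrow> (int \<Rightarrow> bool) measure" where
  "mu' p = distr (mu p) F' Tmap"

definition Fle :: "int \<Rightarrow> (int \<Rightarrow> bool) measure" where
  "Fle x = restrict_space (sigma UNIV {{\<omega>. \<omega> i} | i. i \<le> x}) Omega'"

definition Flt :: "int \<Rightarrow> (int \<Rightarrow> bool) measure" where
  "Flt x = Fle (x - 1)"

text \<open>Left interval-specification: \<open>\<rho> l m \<omega>\<close> is the kernel \<open>\<rho>_\<Lambda>(\<cdot>|\<omega>)\<close> for
  \<open>\<Lambda> = {l..m}\<close> (\<open>l \<le> m\<close>), a probability measure on \<open>\<F>_{\<le>m}\<close> (traced on \<open>\<Omega>'\<close>).\<close>
definition is_LIS :: "(int \<Rightarrow> int \<Rightarrow> (int \<Rightarrow> bool) \<Rightarrow> (int \<Rightarrow> bool) measure) \<Rightarrow> bool" where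
  "is_LIS \<rho> \<longleftrightarrow>
     (\<forall>l m \<omega>. l \<le> m \<longrightarrow> \<omega> \<in> Omega' \<longrightarrow>
        prob_space (\<rho> l m \<omega>) \<and> sets (\<rho> l m \<omega>) = sets (Fle m)) \<and>
     (\<forall>l m A. l \<le> m \<longrightarrow> A \<in> sets (Fle m) \<longrightarrow>
        (\<lambda>\<omega>. measure (\<rho> l m \<omega>) A) \<in> borel_measurable (Flt l)) \<and>
     (\<forall>l m B \<omega>. l \<le> m \<longrightarrow> B \<in> sets (Flt l) \<longrightarrow> \<omega> \<in> Omega' \<longrightarrow>
        measure (\<rho> l m \<omega>) B = indicator B \<omega>) \<and>
     (\<forall>l m l' m' f \<omega>. l' \<le> l \<longrightarrow> l \<le> m \<longrightarrow> m \<le> m' \<longrightarrow>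
        f \<in> borel_measurable (Fle m) \<longrightarrow> bounded (range (f :: (int \<Rightarrow> bool) \<Rightarrow> real)) \<longrightarrow>
        \<omega> \<in> Omega' \<longrightarrow>
        (\<integral>\<eta>. (\<integral>\<zeta>. f \<zeta> \<partial>(\<rho> l m \<eta>)) \<partial>(\<rho> l' m' \<omega>)) = (\<integral>\<zeta>. f \<zeta> \<partial>(\<rho> l' m' \<omega>)))"

definition consistent_LIS ::
  "(int \<Rightarrow> bool) measure \<Rightarrow> (int \<Rightarrow> int \<Rightarrow> (int \<Rightarrow> bool) \<Rightarrow> (int \<Rightarrow> bool) measure) \<Rightarrow> bool" where
  "consistent_LIS \<mu> \<rho> \<longleftrightarrow>
     (\<forall>l m f. l \<le> m \<longrightarrow>
        f \<in> borel_measurable (Fle m) \<longrightarrow> bounded (range (f :: (int \<Rightarrow> bool) \<Rightarrow> real)) \<longrightarrow>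
        (\<integral>\<omega>. (\<integral>\<zeta>. f \<zeta> \<partial>(\<rho> l m \<omega>)) \<partial>\<mu>) = (\<integral>\<omega>. f \<omega> \<partial>\<mu>))"

definition shift :: "int \<Rightarrow> (int \<Rightarrow> bool) \<Rightarrow> (int \<Rightarrow> bool)" where
  "shift i \<omega> = (\<lambda>j. \<omega> (j + i))"

definition transl_inv_LIS :: "(int \<Rightarrow> int \<Rightarrow> (int \<Rightarrow> bool) \<Rightarrow> (int \<Rightarrow> bool) measure) \<Rightarrow> bool" where
  "transl_inv_LIS \<rho> \<longleftrightarrow>
     (\<forall>i \<omega> A. \<omega> \<in> Omega' \<longrightarrow> A \<in> sets (Fle i) \<longrightarrow>
        measure (\<rho> i i \<omega>) A = measure (\<rho> 0 0 (shift i \<omega>)) (shift i ` A))"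

definition nfun :: "(int \<Rightarrow> bool) \<Rightarrow> enat" where
  "nfun \<omega> =
     (if \<not> \<omega> (-2) \<and> \<omega> (-1) then 0
      else if \<exists>i::nat. i \<ge> 1 \<and> \<omega> (- int i - 1) \<and> \<omega> (- int i)
      then enat (LEAST i::nat. i \<ge> 1 \<and> \<omega> (- int i - 1) \<and> \<omega> (- int i))
      else \<infinity>)"

definition lamPF :: "real \<Rightarrow> real" where
  "lamPF p = (1 - p + sqrt ((1 - p) * (3 * p + 1))) / 2"

definition lamr :: "real \<Rightarrow> real" where
  "lamr p = (1 - p - sqrt ((1 - p) * (3 * p + 1))) / 2"

definition aconst :: "real \<Rightarrow> real" where
  "aconst p = lamr p / lamPF p"

definition gp :: "real \<Rightarrow> enat \<Rightarrow> real" where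
  "gp p k = (case k of
      enat n \<Rightarrow>
        (if n = 0 then 0
         else if n = 1 then 1 - p
         else ((-1) ^ (n + 1) * \<bar>aconst p\<bar> ^ n * (lamPF p / (1 - lamr p))
                 + lamPF p / (1 - lamPF p))
            / ((-1) ^ n * \<bar>aconst p\<bar> ^ (n - 1) * (1 / (1 - lamr p))
                 + 1 / (1 - lamPF p)))
    | \<infinity> \<Rightarrow> lamPF p)"

end

theory Submission
  imports Defs
begin

text \<open>The kernel \<open>\<rho>_{{i}}\<close> leaves the past unchanged, makes site \<open>i\<close> empty with probability
  \<open>g_p(n)\<close>, \<open>n\<close> the distance to the nearest pair of occupied sites, and completes the future in
  the least admissible way. Interval kernels are compositions of single-site kernels, which gives
  the properties of a LIS, and consistency of \<open>\<mu>'_p\<close> reduces to single sites.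

  For a single site write \<open>\<sigma> = T \<omega>\<close> with \<open>\<omega>\<close> Bernoulli. On \<open>{n(\<sigma>) = n}\<close> the past of \<open>\<sigma>\<close>
  depends on \<open>\<omega>\<close> only up to the site \<open>i - n\<close>, while the event itself and \<open>\<sigma>_i = 0\<close> say that
  \<open>\<omega>_{i-n+1} = 0\<close> and that the block of length \<open>n - 1\<close>, resp. \<open>n\<close>, starting at \<open>i - n + 2\<close>
  contains no two adjacent occupied sites. By independence the conditional probability of \<open>\<sigma>_i = 0\<close> is the
  ratio \<open>Z_n / Z_{n-1}\<close> of the probabilities of such pair-free blocks. These satisfy
  \<open>Z_{k+2} = (1 - p) Z_{k+1} + p (1 - p) Z_k\<close>, a recursion solved by the eigenvalues
  \<open>\<lambda>_PF, \<lambda>_r\<close>, which gives the formula for \<open>g_p\<close>; the event \<open>n(\<sigma>) = \<infinity>\<close> is negligible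
  because \<open>Z_k \<rightarrow> 0\<close>.\<close>

section \<open>Pair-free blocks and the function \<open>g_p\<close>\<close>

fun no_pair_prob :: "real \<Rightarrow> nat \<Rightarrow> real" where
  "no_pair_prob p 0 = 1"
| "no_pair_prob p (Suc 0) = 1"
| "no_pair_prob p (Suc (Suc k)) = (1 - p) * no_pair_prob p (Suc k) + p * (1 - p) * no_pair_prob p k"

definition no_pair_binet :: "real \<Rightarrow> nat \<Rightarrow> real" where
  "no_pair_binet p k = lamPF p ^ k / (1 - lamPF p) - lamr p ^ k / (1 - lamr p)"

lemma neg_power_abs:
  fixes x :: real
  assumes "x \<le> 0"
  shows "(-1) ^ Suc n * \<bar>x\<bar> ^ n = - (x ^ n)"
proof -
  have "(-1) ^ n * \<bar>x\<bar> ^ n = x ^ n"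
    using assms by (simp flip: power_mult_distrib)
  then show ?thesis by simp
qed

locale bernoulli_param =
  fixes p :: real
  assumes p_pos: "0 < p" and p_less_1: "p < 1"
begin

lemma sqrt_discr_bounds: "1 - p < sqrt ((1 - p) * (3 * p + 1))" "sqrt ((1 - p) * (3 * p + 1)) < 1 + p"
proof -
  have "sqrt ((1 - p)^2) < sqrt ((1 - p) * (3 * p + 1))"
    using p_pos p_less_1 by (intro real_sqrt_less_mono) (simp add: power2_eq_square algebra_simps)
  then show "1 - p < sqrt ((1 - p) * (3 * p + 1))" using p_less_1 by simp
  have "sqrt ((1 - p) * (3 * p + 1)) < sqrt ((1 + p)^2)"
    using p_pos p_less_1 by (intro real_sqrt_less_mono) (simp add: power2_eq_square algebra_simps)
  then show "sqrt ((1 - p) * (3 * p + 1)) < 1 + p" using p_pos by simp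
qed

lemma lamPF_pos: "0 < lamPF p" and lamPF_less_1: "lamPF p < 1"
  and lamr_neg: "lamr p < 0" and lamr_gt_minus_1: "-1 < lamr p"
  using sqrt_discr_bounds p_pos p_less_1 by (auto simp: lamPF_def lamr_def)

lemma lam_char_eq:
  assumes "x = lamPF p \<or> x = lamr p"
  shows "x\<^sup>2 = (1 - p) * x + p * (1 - p)"
proof -
  define s where "s = sqrt ((1 - p) * (3 * p + 1))"
  have "s\<^sup>2 = (1 - p) * (3 * p + 1)"
    using p_pos p_less_1 by (simp add: s_def)
  moreover have "2 * x - (1 - p) = s \<or> 2 * x - (1 - p) = - s"
    using assms by (auto simp: lamPF_def lamr_def s_def)
  then have "(2 * x - (1 - p))\<^sup>2 = s\<^sup>2" by auto
  ultimately show ?thesis by (simp add: power2_eq_square algebra_simps)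
qed

lemma no_pair_binet_rec:
  "no_pair_binet p (Suc (Suc k)) = (1 - p) * no_pair_binet p (Suc k) + p * (1 - p) * no_pair_binet p k"
proof -
  have pow: "x ^ Suc (Suc k) = (1 - p) * x ^ Suc k + p * (1 - p) * x ^ k" if "x = lamPF p \<or> x = lamr p" for x
  proof -
    have "x ^ Suc (Suc k) = x\<^sup>2 * x ^ k" by (simp add: power2_eq_square)
    then show ?thesis unfolding lam_char_eq[OF that] by (simp add: algebra_simps)
  qed
  have l: "lamPF p ^ Suc (Suc k) = (1 - p) * lamPF p ^ Suc k + p * (1 - p) * lamPF p ^ k"
    and r: "lamr p ^ Suc (Suc k) = (1 - p) * lamr p ^ Suc k + p * (1 - p) * lamr p ^ k"
    by (intro pow; simp)+
  show ?thesis
    unfolding no_pair_binet_def l r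
    by (simp add: diff_divide_distrib add_divide_distrib algebra_simps)
qed

lemma no_pair_binet_1: "no_pair_binet p (Suc 0) = no_pair_binet p 0"
  using lamPF_less_1 lamr_neg by (simp add: no_pair_binet_def field_simps)

lemma no_pair_binet_0_pos: "0 < no_pair_binet p 0"
  using lamPF_pos lamPF_less_1 lamr_neg by (simp add: no_pair_binet_def divide_strict_left_mono)

lemma no_pair_prob_eq_binet: "no_pair_prob p k = no_pair_binet p k / no_pair_binet p 0"
  using no_pair_binet_0_pos
  by (induction k rule: induct_nat_012) (simp_all add: no_pair_binet_1 no_pair_binet_rec add_divide_distrib)

lemma no_pair_prob_tendsto_0: "no_pair_prob p \<longlonglongrightarrow> 0"
proof -
  have "(\<lambda>k. no_pair_binet p k / no_pair_binet p 0)
      \<longlonglongrightarrow> (0 / (1 - lamPF p) - 0 / (1 - lamr p)) / no_pair_binet p 0"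
    unfolding no_pair_binet_def using lamPF_pos lamPF_less_1 lamr_neg lamr_gt_minus_1
    by (intro tendsto_intros LIMSEQ_power_zero) auto
  then show ?thesis by (simp add: no_pair_prob_eq_binet [abs_def])
qed

lemma no_pair_prob_bounds:
  "0 < no_pair_prob p (Suc k) \<and> no_pair_prob p (Suc k) \<le> no_pair_prob p k
    \<and> (1 - p) * no_pair_prob p k \<le> no_pair_prob p (Suc k)"
proof (induction k)
  case 0
  then show ?case using p_pos by simp
next
  case (Suc k)
  let ?Z = "no_pair_prob p"
  have "0 < (1 - p) * ?Z (Suc k)" "0 \<le> p * ((1 - p) * ?Z k)"
    using Suc p_pos p_less_1 by simp_all
  moreover have "p * ((1 - p) * ?Z k) \<le> p * ?Z (Suc k)"
    using Suc p_pos by (simp add: mult_left_mono)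
  moreover have "(1 - p) * ?Z (Suc k) + p * ?Z (Suc k) = ?Z (Suc k)"
    by (simp add: algebra_simps)
  ultimately show ?case by (simp add: mult.assoc)
qed

lemma no_pair_prob_pos: "0 < no_pair_prob p k"
  using no_pair_prob_bounds[of k] by (cases k) auto

lemma gp_eq_binet_ratio:
  assumes "2 \<le> n"
  shows "gp p (enat n) = no_pair_binet p n / no_pair_binet p (n - 1)"
proof -
  let ?l = "lamPF p" and ?r = "lamr p"
  obtain k where n: "n = Suc (Suc k)" using assms by (metis add_2_eq_Suc le_Suc_ex)
  have ne: "?l \<noteq> 0" "1 - ?l \<noteq> 0" "1 - ?r \<noteq> 0" using lamPF_pos lamPF_less_1 lamr_neg by auto
  have "aconst p \<le> 0"
    using lamPF_pos lamr_neg by (simp add: aconst_def divide_nonpos_pos)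
  from neg_power_abs[OF this]
  have abs_pow: "(-1) ^ Suc j * \<bar>aconst p\<bar> ^ j = - (?r ^ j / ?l ^ j)" for j
    by (simp add: aconst_def power_divide)
  have "?r ^ n / ?l ^ n * (?l / (1 - ?r)) = (?r ^ n / (1 - ?r)) / ?l ^ Suc k"
    "?l / (1 - ?l) = (?l ^ n / (1 - ?l)) / ?l ^ Suc k"
    using ne by (simp_all add: n field_simps)
  then have num: "- (?r ^ n / ?l ^ n) * (?l / (1 - ?r)) + ?l / (1 - ?l) = no_pair_binet p n / ?l ^ Suc k"
    by (simp add: no_pair_binet_def diff_divide_distrib)
  have "?r ^ Suc k / ?l ^ Suc k * (1 / (1 - ?r)) = (?r ^ Suc k / (1 - ?r)) / ?l ^ Suc k"
    "1 / (1 - ?l) = (?l ^ Suc k / (1 - ?l)) / ?l ^ Suc k"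
    using ne by (simp_all add: field_simps)
  then have den: "- (?r ^ Suc k / ?l ^ Suc k) * (1 / (1 - ?r)) + 1 / (1 - ?l)
      = no_pair_binet p (Suc k) / ?l ^ Suc k"
    by (simp add: no_pair_binet_def diff_divide_distrib)
  have "gp p (enat n) = ((-1) ^ Suc n * \<bar>aconst p\<bar> ^ n * (?l / (1 - ?r)) + ?l / (1 - ?l))
      / ((-1) ^ Suc (Suc k) * \<bar>aconst p\<bar> ^ Suc k * (1 / (1 - ?r)) + 1 / (1 - ?l))"
    by (simp add: gp_def n)
  also have "\<dots> = no_pair_binet p n / no_pair_binet p (n - 1)"
    unfolding abs_pow num den using ne(1) by (simp add: n)
  finally show ?thesis .
qed

lemma gp_eq_no_pair_ratio:
  assumes "2 \<le> n"
  shows "gp p (enat n) = no_pair_prob p n / no_pair_prob p (n - 1)"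
  using gp_eq_binet_ratio[OF assms] no_pair_binet_0_pos by (simp add: no_pair_prob_eq_binet)

lemma gp_range: "0 \<le> gp p k" "gp p k \<le> 1"
proof -
  have "0 \<le> gp p k \<and> gp p k \<le> 1"
  proof (cases k)
    case (enat n)
    consider "n = 0" | "n = 1" | "2 \<le> n" by linarith
    then show ?thesis
    proof cases
      case 3
      then obtain j where "n = Suc (Suc j)" by (metis add_2_eq_Suc le_Suc_ex)
      then show ?thesis
        using enat 3 gp_eq_no_pair_ratio no_pair_prob_bounds[of "Suc j"] no_pair_prob_pos[of "Suc j"]
        by simp
    qed (use enat p_pos p_less_1 in \<open>simp_all add: gp_def\<close>)
  next
    case infinity
    then show ?thesis using lamPF_pos lamPF_less_1 by (simp add: gp_def)
  qed
  then show "0 \<le> gp p k" "gp p k \<le> 1" by auto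
qed

end

section \<open>Admissible configurations\<close>

definition admissible :: "(int \<Rightarrow> bool) \<Rightarrow> bool" where
  "admissible \<omega> \<longleftrightarrow> (\<forall>i. \<omega> i \<longrightarrow> \<omega> (i - 1) \<or> \<omega> (i + 1))"

lemma admissible_Tmap: "admissible (Tmap \<omega>)"
  unfolding admissible_def Tmap_def by auto

lemma Tmap_admissible: "admissible \<omega> \<Longrightarrow> Tmap \<omega> = \<omega>"
  unfolding admissible_def Tmap_def by (auto simp: fun_eq_iff)

lemma in_Omega' [simp]: "\<omega> \<in> Omega' \<longleftrightarrow> admissible \<omega>"
  unfolding Omega'_def using admissible_Tmap Tmap_admissible by (metis rangeE rangeI)

lemma admissibleD: "admissible \<omega> \<Longrightarrow> \<omega> i \<Longrightarrow> \<omega> (i - 1) \<or> \<omega> (i + 1)"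
  unfolding admissible_def by blast

lemma shift_apply [simp]: "shift i \<omega> j = \<omega> (j + i)"
  unfolding shift_def ..

lemma shift_0 [simp]: "shift 0 \<omega> = \<omega>"
  by (simp add: shift_def)

lemma shift_shift: "shift i (shift j \<omega>) = shift (i + j) \<omega>"
  by (simp add: fun_eq_iff algebra_simps)

lemma inj_shift: "inj (shift i)"
  by (rule inj_on_inverseI[of _ "shift (- i)"]) (simp add: shift_shift shift_def)

lemma admissible_shift [simp]: "admissible (shift i \<omega>) \<longleftrightarrow> admissible \<omega>"
proof -
  have "admissible (shift i \<omega>)" if "admissible \<omega>" for i \<omega>
    using that unfolding admissible_def by (auto simp: algebra_simps)
  from this[of \<omega> i] this[of "shift i \<omega>" "- i"] show ?thesis
    by (auto simp: shift_shift shift_def)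
qed

text \<open>Sites after \<open>j\<close> get the least admissible continuation, so that the kernels live on
  \<open>Omega'\<close>; a spin at \<open>j - 1\<close> that would otherwise stay isolated forces the spin at \<open>j\<close>.\<close>
definition extend :: "int \<Rightarrow> (int \<Rightarrow> bool) \<Rightarrow> bool \<Rightarrow> int \<Rightarrow> bool" where
  "extend j \<eta> b = (\<lambda>i. if i < j then \<eta> i
      else if i = j then b \<or> (\<eta> (j - 1) \<and> \<not> \<eta> (j - 2))
      else i = j + 1 \<and> b \<and> \<not> \<eta> (j - 1))"

lemma extend_less: "i < j \<Longrightarrow> extend j \<eta> b i = \<eta> i"
  unfolding extend_def by simp

lemma admissible_extend: "admissible \<eta> \<Longrightarrow> admissible (extend j \<eta> b)"
  unfolding admissible_def extend_def by (smt (verit, best))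

lemma extend_self: "admissible \<eta> \<Longrightarrow> i \<le> j \<Longrightarrow> extend j \<eta> (\<eta> j) i = \<eta> i"
  using admissibleD[of \<eta> "j - 1"] unfolding extend_def by auto

lemma shift_extend: "shift i (extend i \<eta> b) = extend 0 (shift i \<eta>) b"
  unfolding extend_def by (auto simp: fun_eq_iff algebra_simps)

lemma nfun_eq_0_iff: "nfun \<omega> = 0 \<longleftrightarrow> \<not> \<omega> (-2) \<and> \<omega> (-1)"
proof -
  have "(LEAST i::nat. i \<ge> 1 \<and> \<omega> (- int i - 1) \<and> \<omega> (- int i)) \<noteq> 0"
    if "\<exists>i::nat. i \<ge> 1 \<and> \<omega> (- int i - 1) \<and> \<omega> (- int i)"
    using LeastI_ex[OF that] by (metis not_one_le_zero)
  then show ?thesis unfolding nfun_def by (auto simp: zero_enat_def)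
qed

lemma nfun_le_enat: "1 \<le> k \<Longrightarrow> \<omega> (- int k - 1) \<Longrightarrow> \<omega> (- int k) \<Longrightarrow> nfun \<omega> \<le> enat k"
  unfolding nfun_def by (auto intro: Least_le simp: zero_enat_def)

lemma nfun_eq_enat_iff:
  assumes "1 \<le> n"
  shows "nfun \<omega> = enat n \<longleftrightarrow> \<not> (\<not> \<omega> (-2) \<and> \<omega> (-1)) \<and> (\<omega> (- int n - 1) \<and> \<omega> (- int n))
     \<and> (\<forall>k::nat. 1 \<le> k \<and> k < n \<longrightarrow> \<not> (\<omega> (- int k - 1) \<and> \<omega> (- int k)))"
    (is "_ \<longleftrightarrow> ?not0 \<and> ?pair n \<and> ?before")
proof
  assume h: "nfun \<omega> = enat n"
  then have ex: "\<exists>k::nat. 1 \<le> k \<and> ?pair k" and "?not0"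
    using assms unfolding nfun_def by (auto split: if_splits simp: zero_enat_def)
  moreover from this have "nfun \<omega> = enat (LEAST k::nat. 1 \<le> k \<and> ?pair k)"
    unfolding nfun_def by auto
  with h have "(LEAST k::nat. 1 \<le> k \<and> ?pair k) = n" by simp
  ultimately show "?not0 \<and> ?pair n \<and> ?before"
    using LeastI_ex[OF ex] not_less_Least[where P="\<lambda>k::nat. 1 \<le> k \<and> ?pair k"] by auto
next
  assume h: "?not0 \<and> ?pair n \<and> ?before"
  then have "(LEAST k::nat. 1 \<le> k \<and> ?pair k) = n"
    using assms by (intro Least_equality) (auto simp: not_less[symmetric])
  then show "nfun \<omega> = enat n" using h assms unfolding nfun_def by auto
qed

text \<open>Every occupied site of an admissible configuration lies in a pair, so no occupied site can
  separate the origin from the nearest pair.\<close>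
lemma nfun_eq_enat_iff_admissible:
  assumes w: "admissible w" and n: "1 \<le> n"
  shows "nfun w = enat n \<longleftrightarrow> w (- int n - 1) \<and> w (- int n) \<and> (\<forall>x. - int n < x \<and> x < 0 \<longrightarrow> \<not> w x)"
proof -
  have "\<not> w x" if "nfun w = enat n" "- int n < x" "x < 0" for x
  proof
    assume wx: "w x"
    have no_pair: "\<not> (w (y - 1) \<and> w y)" if "- int n < y" "y < 0" for y
      using \<open>nfun w = enat n\<close> that n unfolding nfun_eq_enat_iff[OF n]
      by (auto dest!: spec[of _ "nat (- y)"])
    have "w (x - 1) \<or> w (x + 1)" using admissibleD[OF w wx] .
    moreover have "\<not> w (x - 1)" using no_pair[of x] wx \<open>- int n < x\<close> \<open>x < 0\<close> by auto
    ultimately have "w (x + 1)" by blast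
    then have "x = -1" using no_pair[of "x + 1"] wx \<open>- int n < x\<close> \<open>x < 0\<close> by force
    then have "\<not> w (-2) \<and> w (-1)" using no_pair[of "-1"] wx \<open>- int n < x\<close> by auto
    then show False
      using \<open>nfun w = enat n\<close> unfolding nfun_eq_enat_iff[OF n] by blast
  qed
  moreover have "nfun w = enat n"
    if "w (- int n - 1)" "w (- int n)" "\<forall>x. - int n < x \<and> x < 0 \<longrightarrow> \<not> w x"
    using that n unfolding nfun_eq_enat_iff[OF n]
    by (cases "n = 1") (auto simp: not_less)
  ultimately show ?thesis using n unfolding nfun_eq_enat_iff[OF n] by blast
qed

section \<open>Measurability\<close>

lemma finitely_determined_sets:
  fixes M :: "('i \<Rightarrow> bool) measure"
  assumes "finite S" and "\<And>i. i \<in> S \<Longrightarrow> {x \<in> space M. x i} \<in> sets M"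
    and "\<And>x y. (\<And>i. i \<in> S \<Longrightarrow> x i = y i) \<Longrightarrow> P x = P y"
  shows "{x \<in> space M. P x} \<in> sets M"
  using assms
proof (induction S arbitrary: P rule: finite_induct)
  case empty
  then have "P x = P undefined" for x by blast
  then have "{x \<in> space M. P x} = (if P undefined then space M else {})" by auto
  then show ?case by simp
next
  case (insert a S)
  have IH: "{x \<in> space M. P (x(a := b))} \<in> sets M" for b
  proof (rule insert.IH)
    show "\<And>i. i \<in> S \<Longrightarrow> {x \<in> space M. x i} \<in> sets M" using insert.prems(1) by blast
    show "P (x(a := b)) = P (y(a := b))" if "\<And>i. i \<in> S \<Longrightarrow> x i = y i" for x y
      by (rule insert.prems(2)) (use that in auto)
  qed
  have "{x \<in> space M. P x} = ({x \<in> space M. x a} \<inter> {x \<in> space M. P (x(a := True))})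
      \<union> ((space M - {x \<in> space M. x a}) \<inter> {x \<in> space M. P (x(a := False))})"
    by auto (metis (full_types) fun_upd_idem_iff)+
  moreover have "{x \<in> space M. x a} \<in> sets M" using insert.prems(1) by blast
  ultimately show ?case using IH by auto
qed

lemma space_Mfull [simp]: "space Mfull = UNIV"
  unfolding Mfull_def by (simp add: space_PiM)

lemma space_Fle [simp]: "space (Fle m) = Omega'"
  unfolding Fle_def by (simp add: space_restrict_space)

lemma space_F' [simp]: "space F' = Omega'"
  unfolding F'_def by (simp add: space_restrict_space)

lemma sets_Fle: "sets (Fle m) = (\<inter>) Omega' ` sigma_sets UNIV {{\<omega>. \<omega> i} | i. i \<le> m}"
  unfolding Fle_def by (simp add: sets_restrict_space)

lemma sets_Mfull_coord: "{x \<in> space Mfull. x j} \<in> sets Mfull"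
proof -
  have "(\<lambda>x. x j) \<in> measurable Mfull (count_space UNIV)"
    unfolding Mfull_def by simp
  from measurable_sets[OF this, of "{True}"] show ?thesis by (simp add: vimage_def Int_def)
qed

lemma sets_Fle_coord:
  assumes "j \<le> m"
  shows "{x \<in> space (Fle m). x j} \<in> sets (Fle m)"
proof -
  have "{\<omega>. \<omega> j} \<in> sigma_sets UNIV {{\<omega>. \<omega> i} | i. i \<le> m}"
    using assms by (auto intro: sigma_sets.Basic)
  then have "Omega' \<inter> {\<omega>. \<omega> j} \<in> sets (Fle m)" unfolding sets_Fle by (rule imageI)
  then show ?thesis by (simp add: Int_def)
qed

lemma Mfull_finitely_determined:
  assumes "finite S" and "\<And>x y. (\<And>i. i \<in> S \<Longrightarrow> x i = y i) \<Longrightarrow> P x = P y"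
  shows "{x. P x} \<in> sets Mfull"
  using finitely_determined_sets[OF assms(1) sets_Mfull_coord assms(2)] by simp

lemma Fle_finitely_determined:
  assumes "finite S" and "S \<subseteq> {..m}" and "\<And>x y. (\<And>i. i \<in> S \<Longrightarrow> x i = y i) \<Longrightarrow> P x = P y"
  shows "{x \<in> Omega'. P x} \<in> sets (Fle m)"
proof -
  have "{x \<in> space (Fle m). P x} \<in> sets (Fle m)"
    using assms(2) by (intro finitely_determined_sets[OF assms(1) _ assms(3)] sets_Fle_coord) auto
  then show ?thesis by simp
qed

lemma measurable_MfullI:
  assumes "\<And>j. {x \<in> space M. f x j} \<in> sets M"
  shows "f \<in> measurable M Mfull"
  unfolding Mfull_def
proof (rule measurable_PiM_single')
  fix j
  have "(\<lambda>x. f x j) -` {b} \<inter> space M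
      = (if b then {x \<in> space M. f x j} else space M - {x \<in> space M. f x j})" for b
    by auto
  then have "(\<lambda>x. f x j) -` {b} \<inter> space M \<in> sets M" for b
    using assms[of j] by auto
  then show "(\<lambda>x. f x j) \<in> measurable M (count_space UNIV)"
    by (auto simp: measurable_count_space_eq2_countable)
qed (simp add: space_PiM)

lemma measurable_FleI:
  assumes "f \<in> space M \<rightarrow> Omega'" and "\<And>j. j \<le> m \<Longrightarrow> {x \<in> space M. f x j} \<in> sets M"
  shows "f \<in> measurable M (Fle m)"
  unfolding Fle_def
proof (rule measurable_restrict_space2[OF assms(1)], rule measurable_measure_of)
  fix A assume "A \<in> {{\<omega>. \<omega> i} | i. i \<le> m}"
  then obtain i where "i \<le> m" "A = {\<omega>. \<omega> i}" by auto
  then show "f -` A \<inter> space M \<in> sets M" using assms(2)[of i] by (simp add: vimage_def Int_def conj_commute)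
qed auto

lemma sets_Fle_determined:
  assumes "A \<in> sets (Fle m)" "\<And>j. j \<le> m \<Longrightarrow> x j = y j" "admissible x" "admissible y"
  shows "x \<in> A \<longleftrightarrow> y \<in> A"
proof -
  obtain B where B: "B \<in> sigma_sets UNIV {{\<omega>. \<omega> i} | i. i \<le> m}" "A = Omega' \<inter> B"
    using assms(1) unfolding sets_Fle by auto
  from B(1) have "x \<in> B \<longleftrightarrow> y \<in> B"
    by induction (use assms(2) in auto)
  then show ?thesis using B(2) assms(3,4) by simp
qed

lemma borel_measurable_Fle_determined:
  fixes f :: "(int \<Rightarrow> bool) \<Rightarrow> real"
  assumes "f \<in> borel_measurable (Fle m)" "\<And>j. j \<le> m \<Longrightarrow> x j = y j" "admissible x" "admissible y"
  shows "f x = f y"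
proof -
  have "f -` {f x} \<inter> Omega' \<in> sets (Fle m)"
    using borel_measurable_vimage[OF assms(1)] by simp
  from sets_Fle_determined[OF this assms(2-4)] assms(3) show ?thesis by simp
qed

lemma measurable_Fle_mono:
  assumes "m \<le> m'"
  shows "(\<lambda>x. x) \<in> measurable (Fle m') (Fle m)"
proof (rule measurable_FleI)
  fix j assume "j \<le> m"
  then show "{x \<in> space (Fle m'). x j} \<in> sets (Fle m')" using assms by (intro sets_Fle_coord) simp
qed simp

lemma borel_measurable_Fle_mono:
  "f \<in> borel_measurable (Fle m) \<Longrightarrow> m \<le> m' \<Longrightarrow> f \<in> borel_measurable (Fle m')"
  using measurable_comp[OF measurable_Fle_mono] by (simp add: comp_def)

lemma borel_measurable_Fle_F':
  assumes "f \<in> borel_measurable (Fle m)"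
  shows "f \<in> borel_measurable F'"
proof -
  have "(\<lambda>x. x) \<in> measurable F' (Fle m)"
  proof (rule measurable_FleI)
    fix j
    have "Omega' \<inter> {x \<in> space Mfull. x j} \<in> sets F'"
      unfolding F'_def sets_restrict_space by (rule imageI[OF sets_Mfull_coord])
    then show "{x \<in> space F'. x j} \<in> sets F'" by (simp add: Int_def)
  qed simp
  from measurable_compose[OF this assms] show ?thesis by simp
qed

lemma Tmap_coord_sets: "{x. Tmap x j} \<in> sets Mfull"
  by (rule Mfull_finitely_determined[of "{j - 1, j, j + 1}"]) (auto simp: Tmap_def)

lemma Tmap_measurable_Fle: "Tmap \<in> measurable Mfull (Fle m)"
  by (rule measurable_FleI) (simp_all add: admissible_Tmap Tmap_coord_sets)

lemma Tmap_measurable_F': "Tmap \<in> measurable Mfull F'"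
  unfolding F'_def
proof (rule measurable_restrict_space2)
  show "Tmap \<in> measurable Mfull Mfull"
    by (rule measurable_MfullI) (simp add: Tmap_coord_sets)
qed (simp add: admissible_Tmap)

lemma extend_measurable: "(\<lambda>\<omega>. extend j \<omega> b) \<in> measurable (Fle (j - 1)) (Fle m)"
proof (rule measurable_FleI)
  fix i
  have "{x \<in> Omega'. extend j x b i} \<in> sets (Fle (j - 1))"
  proof (rule Fle_finitely_determined[of "{j - 2, j - 1} \<union> ({i} \<inter> {..<j})"])
    fix x y :: "int \<Rightarrow> bool"
    assume "\<And>k. k \<in> {j - 2, j - 1} \<union> ({i} \<inter> {..<j}) \<Longrightarrow> x k = y k"
    then show "extend j x b i = extend j y b i" by (simp add: extend_def)
  qed auto
  then show "{x \<in> space (Fle (j - 1)). extend j x b i} \<in> sets (Fle (j - 1))" by simp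
qed (simp add: Pi_iff admissible_extend)

lemma shift_measurable: "shift k \<in> measurable (Fle m) (Fle (m - k))"
proof (rule measurable_FleI)
  fix j assume "j \<le> m - k"
  then show "{x \<in> space (Fle m). shift k x j} \<in> sets (Fle m)" using sets_Fle_coord[of "j + k" m] by simp
qed (simp add: Pi_iff)

lemma nfun_eq_enat_determined:
  assumes "\<And>i. - int n - 2 \<le> i \<Longrightarrow> i < 0 \<Longrightarrow> x i = y i"
  shows "nfun x = enat n \<longleftrightarrow> nfun y = enat n"
proof (cases "n = 0")
  case True
  then show ?thesis using assms[of "-1"] assms[of "-2"] by (simp add: zero_enat_def[symmetric] nfun_eq_0_iff)
next
  case False
  then have n: "1 \<le> n" by simp
  have eq: "x (- int k - 1) = y (- int k - 1)" "x (- int k) = y (- int k)" if "1 \<le> k" "k \<le> n" for k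
    using that assms by simp_all
  then have "(\<forall>k. 1 \<le> k \<and> k < n \<longrightarrow> \<not> (x (- int k - 1) \<and> x (- int k)))
      \<longleftrightarrow> (\<forall>k. 1 \<le> k \<and> k < n \<longrightarrow> \<not> (y (- int k - 1) \<and> y (- int k)))"
    by auto
  then show ?thesis
    using assms[of "-1"] assms[of "-2"] eq[OF n order.refl] unfolding nfun_eq_enat_iff[OF n] by simp
qed

lemma nfun_shift_measurable: "(\<lambda>\<omega>. nfun (shift j \<omega>)) \<in> measurable (Fle (j - 1)) (count_space UNIV)"
proof (rule measurable_count_space_eq2_countable[THEN iffD2], intro conjI ballI)
  have fin: "{x \<in> Omega'. nfun (shift j x) = enat n} \<in> sets (Fle (j - 1))" for n
    by (rule Fle_finitely_determined[of "{j - int n - 2 ..< j}"])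
      (auto intro!: nfun_eq_enat_determined)
  fix v :: enat
  show "(\<lambda>\<omega>. nfun (shift j \<omega>)) -` {v} \<inter> space (Fle (j - 1)) \<in> sets (Fle (j - 1))"
  proof (cases v)
    case (enat n)
    then show ?thesis using fin[of n] by (simp add: vimage_def Int_def conj_commute)
  next
    case infinity
    have "(\<Union>n. {x \<in> Omega'. nfun (shift j x) = enat n}) \<in> sets (Fle (j - 1))"
      using fin by (intro sets.countable_UN) auto
    then have "space (Fle (j - 1)) - (\<Union>n. {x \<in> Omega'. nfun (shift j x) = enat n}) \<in> sets (Fle (j - 1))"
      by (rule sets.Diff[OF sets.top])
    moreover have "(\<lambda>\<omega>. nfun (shift j \<omega>)) -` {v} \<inter> space (Fle (j - 1))
        = space (Fle (j - 1)) - (\<Union>n. {x \<in> Omega'. nfun (shift j x) = enat n})"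
      using infinity by auto
    ultimately show ?thesis by simp
  qed
qed simp

section \<open>The left interval-specification\<close>

lemma integral_pmf_cong:
  "(\<And>x. x \<in> set_pmf M \<Longrightarrow> f x = g x) \<Longrightarrow> (\<integral>x. f x \<partial>measure_pmf M) = (\<integral>x. g x \<partial>measure_pmf M)"
  by (intro integral_cong_AE) (auto simp: AE_measure_pmf_iff)

lemma integral_pmf_const: "(\<integral>x. c \<partial>measure_pmf M) = (c :: real)"
  by (simp add: measure_pmf.prob_space)

lemma integral_bind_pmf_bounded:
  fixes f :: "'b \<Rightarrow> real"
  assumes "\<And>x. \<bar>f x\<bar> \<le> B"
  shows "(\<integral>x. f x \<partial>measure_pmf (bind_pmf M N)) = (\<integral>x. (\<integral>y. f y \<partial>measure_pmf (N x)) \<partial>measure_pmf M)"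
  unfolding measure_pmf_bind
  by (rule integral_bind[where K="count_space UNIV" and B=B and B'=1])
    (use assms in \<open>simp_all add: measure_pmf_in_subprob_algebra measure_pmf.finite_measure_axioms
      measure_pmf.emeasure_space_1\<close>)

lemma prob_space_integral_abs_le:
  fixes f :: "'a \<Rightarrow> real"
  assumes "prob_space M" "f \<in> borel_measurable M" "\<And>x. \<bar>f x\<bar> \<le> B"
  shows "\<bar>integral\<^sup>L M f\<bar> \<le> B"
proof -
  interpret prob_space M by fact
  have "\<bar>integral\<^sup>L M f\<bar> \<le> integral\<^sup>L M (\<lambda>x. \<bar>f x\<bar>)"
    by (rule integral_abs_bound)
  also have "\<dots> \<le> B"
    using assms by (intro integral_le_const integrable_const_bound[where B=B]) auto
  finally show ?thesis .
qed

definition empty_prob :: "real \<Rightarrow> int \<Rightarrow> (int \<Rightarrow> bool) \<Rightarrow> real" where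
  "empty_prob p j \<eta> = gp p (nfun (shift j \<eta>))"

definition site_kernel :: "real \<Rightarrow> int \<Rightarrow> (int \<Rightarrow> bool) \<Rightarrow> (int \<Rightarrow> bool) pmf" where
  "site_kernel p j \<eta> = map_pmf (extend j \<eta>) (bernoulli_pmf (1 - empty_prob p j \<eta>))"

fun block_kernel :: "real \<Rightarrow> int \<Rightarrow> nat \<Rightarrow> (int \<Rightarrow> bool) \<Rightarrow> (int \<Rightarrow> bool) pmf" where
  "block_kernel p l 0 \<eta> = return_pmf \<eta>"
| "block_kernel p l (Suc k) \<eta> = site_kernel p l \<eta> \<bind> block_kernel p (l + 1) k"

text \<open>Only needed to make \<open>distr\<close> land in \<open>Omega'\<close>: on the support of the kernels, which start
  from admissible configurations, it is the identity.\<close>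
definition to_admissible :: "(int \<Rightarrow> bool) \<Rightarrow> int \<Rightarrow> bool" where
  "to_admissible \<eta> = (if admissible \<eta> then \<eta> else (\<lambda>_. False))"

definition rho :: "real \<Rightarrow> int \<Rightarrow> int \<Rightarrow> (int \<Rightarrow> bool) \<Rightarrow> (int \<Rightarrow> bool) measure" where
  "rho p l m \<omega> = distr (block_kernel p l (nat (m - l + 1)) \<omega>) (Fle m) to_admissible"

lemma to_admissible_measurable: "to_admissible \<in> measurable (measure_pmf P) (Fle m)"
proof (rule measurable_FleI)
  show "to_admissible \<in> space (measure_pmf P) \<rightarrow> Omega'"
    by (auto simp: to_admissible_def admissible_def)
qed simp

lemma prob_space_rho: "prob_space (rho p l m \<omega>)"
  unfolding rho_def
  by (rule prob_space.prob_space_distr[OF measure_pmf.prob_space_axioms to_admissible_measurable])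

lemma sets_rho [simp]: "sets (rho p l m \<omega>) = sets (Fle m)"
  unfolding rho_def by simp

lemma space_rho [simp]: "space (rho p l m \<omega>) = Omega'"
  unfolding rho_def by simp

lemma block_kernel_add:
  "block_kernel p l (a + b) \<omega> = block_kernel p l a \<omega> \<bind> block_kernel p (l + int a) b"
proof (induction a arbitrary: l \<omega>)
  case 0
  then show ?case by (simp add: bind_return_pmf)
next
  case (Suc a)
  have "block_kernel p l (Suc a + b) \<omega> = site_kernel p l \<omega> \<bind> block_kernel p (l + 1) (a + b)"
    by simp
  also have "\<dots> = site_kernel p l \<omega> \<bind> (\<lambda>\<eta>. block_kernel p (l + 1) a \<eta> \<bind> block_kernel p (l + 1 + int a) b)"
    by (intro arg_cong[where f="bind_pmf (site_kernel p l \<omega>)"] ext Suc.IH)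
  also have "\<dots> = block_kernel p l (Suc a) \<omega> \<bind> block_kernel p (l + int (Suc a)) b"
    by (simp add: bind_assoc_pmf algebra_simps)
  finally show ?case .
qed

lemma block_kernel_0 [simp]: "block_kernel p l 0 = return_pmf"
  by (rule ext) simp

lemma set_pmf_block_kernel:
  assumes "admissible \<omega>" "\<xi> \<in> set_pmf (block_kernel p l k \<omega>)"
  shows "admissible \<xi> \<and> (\<forall>i<l. \<xi> i = \<omega> i)"
  using assms
proof (induction k arbitrary: l \<omega>)
  case 0
  then show ?case by simp
next
  case (Suc k)
  then obtain b where "\<xi> \<in> set_pmf (block_kernel p (l + 1) k (extend l \<omega> b))"
    by (auto simp: site_kernel_def)
  with Suc.IH[OF admissible_extend[OF Suc.prems(1)]] show ?case
    by (auto simp: extend_less)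
qed

lemma integral_block_kernel_past:
  fixes f :: "(int \<Rightarrow> bool) \<Rightarrow> real"
  assumes "f \<in> borel_measurable (Fle (l - 1))" "admissible \<omega>"
  shows "(\<integral>\<xi>. f \<xi> \<partial>block_kernel p l k \<omega>) = f \<omega>"
proof -
  have "(\<integral>\<xi>. f \<xi> \<partial>block_kernel p l k \<omega>) = (\<integral>\<xi>. f \<omega> \<partial>block_kernel p l k \<omega>)"
  proof (rule integral_pmf_cong)
    fix \<xi> assume "\<xi> \<in> set_pmf (block_kernel p l k \<omega>)"
    with set_pmf_block_kernel[OF assms(2)] show "f \<xi> = f \<omega>"
      by (intro borel_measurable_Fle_determined[OF assms(1)]) (auto simp: assms(2))
  qed
  then show ?thesis by (simp add: integral_pmf_const)
qed

lemma integral_block_kernel_add: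
  fixes f :: "(int \<Rightarrow> bool) \<Rightarrow> real"
  assumes "\<And>x. \<bar>f x\<bar> \<le> B"
  shows "(\<integral>\<xi>. f \<xi> \<partial>block_kernel p l (a + b) \<omega>)
    = (\<integral>\<eta>. (\<integral>\<xi>. f \<xi> \<partial>block_kernel p (l + int a) b \<eta>) \<partial>block_kernel p l a \<omega>)"
  unfolding block_kernel_add by (rule integral_bind_pmf_bounded[OF assms])

lemma integral_rho:
  fixes f :: "(int \<Rightarrow> bool) \<Rightarrow> real"
  assumes "f \<in> borel_measurable (Fle m)" "admissible \<omega>"
  shows "integral\<^sup>L (rho p l m \<omega>) f = (\<integral>\<xi>. f \<xi> \<partial>block_kernel p l (nat (m - l + 1)) \<omega>)"
proof -
  have "integral\<^sup>L (rho p l m \<omega>) f = (\<integral>\<xi>. f (to_admissible \<xi>) \<partial>block_kernel p l (nat (m - l + 1)) \<omega>)"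
    unfolding rho_def by (rule integral_distr[OF to_admissible_measurable assms(1)])
  also have "\<dots> = (\<integral>\<xi>. f \<xi> \<partial>block_kernel p l (nat (m - l + 1)) \<omega>)"
    using set_pmf_block_kernel[OF assms(2)] by (intro integral_pmf_cong) (simp add: to_admissible_def)
  finally show ?thesis .
qed

lemma integral_rho_abs_le:
  fixes f :: "(int \<Rightarrow> bool) \<Rightarrow> real"
  assumes "f \<in> borel_measurable (Fle m)" "\<And>x. \<bar>f x\<bar> \<le> B"
  shows "\<bar>integral\<^sup>L (rho p l m \<eta>) f\<bar> \<le> B"
  using assms by (intro prob_space_integral_abs_le prob_space_rho) (simp_all cong: measurable_cong_sets)

lemma rho_past:
  assumes "B \<in> sets (Flt l)" "l \<le> m" "admissible \<omega>"
  shows "measure (rho p l m \<omega>) B = indicator B \<omega>"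
proof -
  have B: "B \<in> sets (Fle (l - 1))" using assms(1) by (simp add: Flt_def)
  then have "B \<subseteq> Omega'" using sets.sets_into_space by fastforce
  then have "measure (rho p l m \<omega>) B = integral\<^sup>L (rho p l m \<omega>) (indicator B)"
    by (simp add: Int_absorb2)
  also have "\<dots> = (\<integral>\<xi>. indicator B \<xi> \<partial>block_kernel p l (nat (m - l + 1)) \<omega>)"
    using assms(2)
    by (intro integral_rho[OF _ assms(3)] borel_measurable_Fle_mono[OF borel_measurable_indicator[OF B]]) simp
  also have "\<dots> = indicator B \<omega>"
    by (rule integral_block_kernel_past[OF borel_measurable_indicator[OF B] assms(3)])
  finally show ?thesis .
qed

lemma empty_prob_measurable: "empty_prob p j \<in> borel_measurable (Fle (j - 1))"
  unfolding empty_prob_def[abs_def] using nfun_shift_measurable by measurable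

lemma shift_image_sets:
  assumes "A \<in> sets (Fle i)"
  shows "shift i ` A \<in> sets (Fle 0)"
proof -
  have inv: "shift i (shift (- i) x) = x" "shift (- i) (shift i x) = x" for x
    by (simp_all add: shift_shift shift_def)
  have "A \<subseteq> Omega'" using sets.sets_into_space[OF assms] by simp
  have "shift i ` A = shift (- i) -` A \<inter> space (Fle 0)"
  proof (intro set_eqI iffI)
    fix x assume "x \<in> shift i ` A"
    then show "x \<in> shift (- i) -` A \<inter> space (Fle 0)" using \<open>A \<subseteq> Omega'\<close> inv(2) by auto
  next
    fix x assume "x \<in> shift (- i) -` A \<inter> space (Fle 0)"
    then show "x \<in> shift i ` A" using inv(1)[of x] by (metis IntD1 image_eqI vimageE)
  qed
  also have "\<dots> \<in> sets (Fle 0)"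
    using measurable_sets[OF shift_measurable[of "- i" 0] , of A] assms by simp
  finally show ?thesis .
qed

context bernoulli_param
begin

lemma empty_prob_range: "0 \<le> empty_prob p j \<eta>" "empty_prob p j \<eta> \<le> 1"
  unfolding empty_prob_def using gp_range by auto

lemma integral_site_kernel:
  "(\<integral>\<xi>. f \<xi> \<partial>site_kernel p j \<eta>)
    = f (extend j \<eta> True) * (1 - empty_prob p j \<eta>) + f (extend j \<eta> False) * empty_prob p j \<eta>"
  unfolding site_kernel_def using empty_prob_range[of j \<eta>] by simp

lemma integral_rho_singleton:
  fixes f :: "(int \<Rightarrow> bool) \<Rightarrow> real"
  assumes "f \<in> borel_measurable (Fle m)" "admissible \<omega>"
  shows "integral\<^sup>L (rho p m m \<omega>) f
    = f (extend m \<omega> True) * (1 - empty_prob p m \<omega>) + f (extend m \<omega> False) * empty_prob p m \<omega>"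
  using integral_rho[OF assms, of p m] by (simp add: bind_return_pmf' integral_site_kernel)

lemma measure_rho_singleton:
  assumes "A \<in> sets (Fle m)" "admissible \<omega>"
  shows "measure (rho p m m \<omega>) A
    = indicator A (extend m \<omega> True) * (1 - empty_prob p m \<omega>)
      + indicator A (extend m \<omega> False) * empty_prob p m \<omega>"
proof -
  have "A \<subseteq> Omega'" using sets.sets_into_space[OF assms(1)] by simp
  then have "measure (rho p m m \<omega>) A = integral\<^sup>L (rho p m m \<omega>) (indicator A)"
    by (simp add: Int_absorb2)
  then show ?thesis
    using integral_rho_singleton[OF borel_measurable_indicator[OF assms(1)] assms(2)] by simp
qed

lemma integral_rho_singleton_measurable:
  fixes f :: "(int \<Rightarrow> bool) \<Rightarrow> real"
  assumes "f \<in> borel_measurable (Fle m)"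
  shows "(\<lambda>\<eta>. integral\<^sup>L (rho p m m \<eta>) f) \<in> borel_measurable (Fle (m - 1))"
proof -
  have "(\<lambda>\<eta>. f (extend m \<eta> True) * (1 - empty_prob p m \<eta>) + f (extend m \<eta> False) * empty_prob p m \<eta>)
      \<in> borel_measurable (Fle (m - 1))"
    using measurable_compose[OF extend_measurable assms] empty_prob_measurable by measurable
  then show ?thesis
    by (rule measurable_cong[THEN iffD1, rotated]) (simp add: integral_rho_singleton[OF assms])
qed

lemma rho_split_last:
  fixes f :: "(int \<Rightarrow> bool) \<Rightarrow> real"
  assumes f: "f \<in> borel_measurable (Fle m)" "\<And>x. \<bar>f x\<bar> \<le> B" and "l < m" "admissible \<omega>"
  shows "integral\<^sup>L (rho p l m \<omega>) f = integral\<^sup>L (rho p l (m - 1) \<omega>) (\<lambda>\<eta>. integral\<^sup>L (rho p m m \<eta>) f)"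
proof -
  define a where "a = nat (m - l)"
  have a: "nat (m - l + 1) = a + 1" "nat (m - 1 - l + 1) = a" "l + int a = m"
    using \<open>l < m\<close> by (auto simp: a_def)
  have "integral\<^sup>L (rho p l m \<omega>) f = (\<integral>\<xi>. f \<xi> \<partial>block_kernel p l (a + 1) \<omega>)"
    using integral_rho[OF f(1) \<open>admissible \<omega>\<close>] a(1) by simp
  also have "\<dots> = (\<integral>\<eta>. (\<integral>\<xi>. f \<xi> \<partial>block_kernel p m 1 \<eta>) \<partial>block_kernel p l a \<omega>)"
    using integral_block_kernel_add[OF f(2), of p l a 1 \<omega>] by (simp only: a(3))
  also have "\<dots> = (\<integral>\<eta>. integral\<^sup>L (rho p m m \<eta>) f \<partial>block_kernel p l a \<omega>)"
    using set_pmf_block_kernel[OF \<open>admissible \<omega>\<close>]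
    by (intro integral_pmf_cong) (simp add: integral_rho[OF f(1)])
  also have "\<dots> = integral\<^sup>L (rho p l (m - 1) \<omega>) (\<lambda>\<eta>. integral\<^sup>L (rho p m m \<eta>) f)"
    using integral_rho[OF integral_rho_singleton_measurable[OF f(1)] \<open>admissible \<omega>\<close>, of p l] a(2)
    by simp
  finally show ?thesis .
qed

lemma rho_integral_measurable:
  fixes f :: "(int \<Rightarrow> bool) \<Rightarrow> real"
  assumes "l \<le> m" "f \<in> borel_measurable (Fle m)" "\<And>x. \<bar>f x\<bar> \<le> B"
  shows "(\<lambda>\<omega>. integral\<^sup>L (rho p l m \<omega>) f) \<in> borel_measurable (Flt l)"
  using assms
proof (induction m arbitrary: f rule: int_ge_induct)
  case base
  then show ?case using integral_rho_singleton_measurable by (simp add: Flt_def)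
next
  case (step m)
  let ?F = "\<lambda>\<eta>. integral\<^sup>L (rho p (m + 1) (m + 1) \<eta>) f"
  have "(\<lambda>\<omega>. integral\<^sup>L (rho p l m \<omega>) ?F) \<in> borel_measurable (Flt l)"
    using integral_rho_singleton_measurable[OF step.prems(1)] integral_rho_abs_le[OF step.prems]
    by (intro step.IH) simp_all
  then show ?case
  proof (rule measurable_cong[THEN iffD1, rotated])
    fix \<omega> assume "\<omega> \<in> space (Flt l)"
    then show "integral\<^sup>L (rho p l m \<omega>) ?F = integral\<^sup>L (rho p l (m + 1) \<omega>) f"
      using rho_split_last[OF step.prems, of l \<omega>] step.hyps by (simp add: Flt_def)
  qed
qed


lemma rho_nest:
  fixes f :: "(int \<Rightarrow> bool) \<Rightarrow> real"
  assumes "l' \<le> l" "l \<le> m" "m \<le> m'" and f: "f \<in> borel_measurable (Fle m)" "\<And>x. \<bar>f x\<bar> \<le> B"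
    and "admissible \<omega>"
  shows "(\<integral>\<eta>. integral\<^sup>L (rho p l m \<eta>) f \<partial>rho p l' m' \<omega>) = integral\<^sup>L (rho p l' m' \<omega>) f"
proof -
  define a k c where "a = nat (l - l')" and "k = nat (m - l + 1)" and "c = nat (m' - m)"
  have lengths: "nat (m' - l' + 1) = a + (k + c)" "l' + int a = l" "l + int k = m + 1"
    using assms(1-3) by (auto simp: a_def k_def c_def)
  define F where "F \<eta> = integral\<^sup>L (rho p l m \<eta>) f" for \<eta>
  have F: "F \<in> borel_measurable (Fle (l - 1))" "\<And>x. \<bar>F x\<bar> \<le> B"
    using rho_integral_measurable[OF assms(2) f] integral_rho_abs_le[OF f]
    by (simp_all add: F_def[abs_def] Flt_def)
  have inner_F: "(\<integral>\<xi>. F \<xi> \<partial>block_kernel p l (k + c) \<eta>) = F \<eta>" if "admissible \<eta>" for \<eta>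
    by (rule integral_block_kernel_past[OF F(1) that])
  have inner_f: "(\<integral>\<xi>. f \<xi> \<partial>block_kernel p l (k + c) \<eta>) = F \<eta>" if "admissible \<eta>" for \<eta>
  proof -
    have "(\<integral>\<xi>. f \<xi> \<partial>block_kernel p l (k + c) \<eta>)
        = (\<integral>\<zeta>. (\<integral>\<xi>. f \<xi> \<partial>block_kernel p (m + 1) c \<zeta>) \<partial>block_kernel p l k \<eta>)"
      using integral_block_kernel_add[OF f(2), of p l k c \<eta>] by (simp only: lengths)
    also have "\<dots> = (\<integral>\<zeta>. f \<zeta> \<partial>block_kernel p l k \<eta>)"
      using set_pmf_block_kernel[OF that] f(1)
      by (intro integral_pmf_cong integral_block_kernel_past) simp_all
    also have "\<dots> = F \<eta>"
      unfolding F_def k_def by (rule integral_rho[OF f(1) that, symmetric])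
    finally show ?thesis .
  qed
  have outer: "(\<integral>\<xi>. g \<xi> \<partial>block_kernel p l' (nat (m' - l' + 1)) \<omega>) = (\<integral>\<eta>. F \<eta> \<partial>block_kernel p l' a \<omega>)"
    if "\<And>x. \<bar>g x\<bar> \<le> B" "\<And>\<eta>. admissible \<eta> \<Longrightarrow> (\<integral>\<xi>. g \<xi> \<partial>block_kernel p l (k + c) \<eta>) = F \<eta>" for g
  proof -
    have "(\<integral>\<xi>. g \<xi> \<partial>block_kernel p l' (nat (m' - l' + 1)) \<omega>)
        = (\<integral>\<eta>. (\<integral>\<xi>. g \<xi> \<partial>block_kernel p l (k + c) \<eta>) \<partial>block_kernel p l' a \<omega>)"
      using integral_block_kernel_add[where f=g and B=B and p=p and l=l' and a=a and b="k + c"]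
      by (simp only: lengths that(1))
    also have "\<dots> = (\<integral>\<eta>. F \<eta> \<partial>block_kernel p l' a \<omega>)"
      using set_pmf_block_kernel[OF \<open>admissible \<omega>\<close>] by (intro integral_pmf_cong) (simp add: that(2))
    finally show ?thesis .
  qed
  have Fm': "F \<in> borel_measurable (Fle m')"
    using assms(2,3) by (intro borel_measurable_Fle_mono[OF F(1)]) simp
  have "(\<integral>\<eta>. F \<eta> \<partial>rho p l' m' \<omega>) = (\<integral>\<eta>. F \<eta> \<partial>block_kernel p l' a \<omega>)"
    unfolding integral_rho[OF Fm' \<open>admissible \<omega>\<close>] by (rule outer[OF F(2) inner_F])
  also have "\<dots> = integral\<^sup>L (rho p l' m' \<omega>) f"
    unfolding integral_rho[OF borel_measurable_Fle_mono[OF f(1) assms(3)] \<open>admissible \<omega>\<close>]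
    by (rule outer[OF f(2) inner_f, symmetric])
  finally show ?thesis unfolding F_def .
qed

lemma rho_transl:
  assumes "admissible \<omega>" "A \<in> sets (Fle i)"
  shows "measure (rho p i i \<omega>) A = measure (rho p 0 0 (shift i \<omega>)) (shift i ` A)"
proof -
  have "empty_prob p 0 (shift i \<omega>) = empty_prob p i \<omega>"
    by (simp add: empty_prob_def shift_shift)
  moreover have "indicator (shift i ` A) (shift i x) = (indicator A x :: real)" for x
    using inj_shift[of i] by (simp add: indicator_def inj_image_mem_iff)
  ultimately show ?thesis
    using assms by (simp add: measure_rho_singleton shift_image_sets flip: shift_extend)
qed

lemma rho_origin:
  assumes "admissible \<omega>"
  shows "measure (rho p 0 0 \<omega>) {\<eta> \<in> Omega'. \<not> \<eta> 0} = gp p (nfun \<omega>)"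
    and "measure (rho p 0 0 \<omega>) {\<eta> \<in> Omega'. \<eta> 0} = 1 - gp p (nfun \<omega>)"
proof -
  have sets: "{\<eta> \<in> Omega'. \<not> \<eta> 0} \<in> sets (Fle 0)" "{\<eta> \<in> Omega'. \<eta> 0} \<in> sets (Fle 0)"
    by (rule Fle_finitely_determined[of "{0}"]; simp)+
  have gp_0: "gp p (nfun \<omega>) = 0" if "\<omega> (-1) \<and> \<not> \<omega> (-2)"
    using that nfun_eq_0_iff[of \<omega>] by (simp add: gp_def zero_enat_def)
  have ext: "admissible (extend 0 \<omega> b)" "extend 0 \<omega> True 0" "extend 0 \<omega> False 0 \<longleftrightarrow> \<omega> (-1) \<and> \<not> \<omega> (-2)" for b
    using admissible_extend[OF assms] by (simp_all add: extend_def)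
  show "measure (rho p 0 0 \<omega>) {\<eta> \<in> Omega'. \<not> \<eta> 0} = gp p (nfun \<omega>)"
    unfolding measure_rho_singleton[OF sets(1) assms] using ext gp_0
    by (cases "\<omega> (-1) \<and> \<not> \<omega> (-2)") (simp_all add: empty_prob_def)
  show "measure (rho p 0 0 \<omega>) {\<eta> \<in> Omega'. \<eta> 0} = 1 - gp p (nfun \<omega>)"
    unfolding measure_rho_singleton[OF sets(2) assms] using ext gp_0
    by (cases "\<omega> (-1) \<and> \<not> \<omega> (-2)") (simp_all add: empty_prob_def)
qed

lemma is_LIS_rho: "is_LIS (rho p)"
  unfolding is_LIS_def
proof (intro conjI allI impI)
  fix l m A assume "l \<le> m" "A \<in> sets (Fle m)"
  moreover from this have "A \<subseteq> Omega'" using sets.sets_into_space by fastforce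
  ultimately show "(\<lambda>\<omega>. measure (rho p l m \<omega>) A) \<in> borel_measurable (Flt l)"
    using rho_integral_measurable[OF _ borel_measurable_indicator, of l m A 1]
    by (simp add: Int_absorb2)
next
  fix l m l' m' \<omega> and f :: "(int \<Rightarrow> bool) \<Rightarrow> real"
  assume "l' \<le> l" "l \<le> m" "m \<le> m'" "f \<in> borel_measurable (Fle m)" "bounded (range f)" "\<omega> \<in> Omega'"
  moreover from \<open>bounded (range f)\<close> obtain B where "\<And>x. \<bar>f x\<bar> \<le> B"
    by (auto simp: bounded_real)
  ultimately show "(\<integral>\<eta>. (\<integral>\<zeta>. f \<zeta> \<partial>rho p l m \<eta>) \<partial>rho p l' m' \<omega>) = (\<integral>\<zeta>. f \<zeta> \<partial>rho p l' m' \<omega>)"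
    using rho_nest[of l' l m m' f B \<omega>] by simp
qed (simp_all add: prob_space_rho rho_past)

lemma transl_inv_LIS_rho: "transl_inv_LIS (rho p)"
  unfolding transl_inv_LIS_def using rho_transl by simp

lemma consistent_LIS_rhoI:
  assumes "space \<mu> = Omega'"
    and single: "\<And>i (f :: (int \<Rightarrow> bool) \<Rightarrow> real) (B :: real). f \<in> borel_measurable (Fle i) \<Longrightarrow> (\<And>x. \<bar>f x\<bar> \<le> B) \<Longrightarrow>
      (\<integral>\<omega>. integral\<^sup>L (rho p i i \<omega>) f \<partial>\<mu>) = (\<integral>\<omega>. f \<omega> \<partial>\<mu>)"
  shows "consistent_LIS \<mu> (rho p)"
proof -
  have "(\<integral>\<omega>. integral\<^sup>L (rho p l m \<omega>) f \<partial>\<mu>) = (\<integral>\<omega>. f \<omega> \<partial>\<mu>)"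
    if "l \<le> m" "f \<in> borel_measurable (Fle m)" "\<And>x. \<bar>f x\<bar> \<le> (B :: real)" for l m f B
    using that
  proof (induction m arbitrary: f rule: int_ge_induct)
    case base
    then show ?case by (rule single)
  next
    case (step m)
    let ?F = "\<lambda>\<eta>. integral\<^sup>L (rho p (m + 1) (m + 1) \<eta>) f"
    have "(\<integral>\<omega>. integral\<^sup>L (rho p l (m + 1) \<omega>) f \<partial>\<mu>) = (\<integral>\<omega>. integral\<^sup>L (rho p l m \<omega>) ?F \<partial>\<mu>)"
      by (rule Bochner_Integration.integral_cong[OF refl])
        (use rho_split_last[OF step.prems] step.hyps assms(1) in simp)
    also have "\<dots> = (\<integral>\<omega>. ?F \<omega> \<partial>\<mu>)"
      using integral_rho_singleton_measurable[OF step.prems(1)] integral_rho_abs_le[OF step.prems]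
      by (intro step.IH) simp_all
    also have "\<dots> = (\<integral>\<omega>. f \<omega> \<partial>\<mu>)"
      by (rule single[OF step.prems])
    finally show ?case .
  qed
  then show ?thesis
    unfolding consistent_LIS_def by (metis bounded_real rangeI)
qed

end

section \<open>The Bernoulli field and its thinning\<close>

lemma sets_mu [measurable_cong]: "sets (mu p) = sets Mfull"
  unfolding mu_def Mfull_def by (intro sets_PiM_cong) simp_all

lemma space_mu [simp]: "space (mu p) = UNIV"
  unfolding mu_def by (simp add: space_PiM)

lemma prob_space_mu: "prob_space (mu p)"
  unfolding mu_def by (intro prob_space_PiM measure_pmf.prob_space_axioms)

lemma measure_mu_UNIV [simp]: "measure (mu p) UNIV = 1"
  using prob_space.prob_space[OF prob_space_mu, of p] by simp

lemma integrable_mu_bounded: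
  fixes f :: "(int \<Rightarrow> bool) \<Rightarrow> real"
  assumes "f \<in> borel_measurable Mfull" "\<And>x. \<bar>f x\<bar> \<le> B"
  shows "integrable (mu p) f"
proof -
  interpret prob_space "mu p" by (rule prob_space_mu)
  show ?thesis
    using assms by (intro integrable_const_bound[where B=B]) (auto cong: measurable_cong_sets[OF sets_mu])
qed

lemma of_bool_Mfull_measurable:
  assumes "finite S" "\<And>x y. (\<And>i. i \<in> S \<Longrightarrow> x i = y i) \<Longrightarrow> P x = P y"
  shows "(\<lambda>x. of_bool (P x) :: real) \<in> borel_measurable Mfull"
proof -
  have "(indicator {x. P x} :: _ \<Rightarrow> real) \<in> borel_measurable Mfull"
    by (intro borel_measurable_indicator Mfull_finitely_determined[OF assms])
  moreover have "(\<lambda>x. of_bool (P x) :: real) = indicator {x. P x}"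
    by (simp add: fun_eq_iff indicator_def)
  ultimately show ?thesis by simp
qed

lemma indep_coords_mu: "prob_space.indep_vars (mu p) (\<lambda>_. measure_pmf (bernoulli_pmf p)) (\<lambda>i \<omega>. \<omega> i) UNIV"
proof -
  interpret P: product_prob_space "\<lambda>_::int. measure_pmf (bernoulli_pmf p)" UNIV
    by (intro product_prob_spaceI measure_pmf.prob_space_axioms)
  interpret prob_space "mu p" by (rule prob_space_mu)
  have "distr (mu p) (measure_pmf (bernoulli_pmf p)) (\<lambda>\<omega>. \<omega> i) = measure_pmf (bernoulli_pmf p)" for i
    unfolding mu_def by (rule P.PiM_component) simp
  moreover have "(\<lambda>x. \<lambda>i\<in>UNIV. x i) = (\<lambda>x::int \<Rightarrow> bool. x)" by (simp add: fun_eq_iff)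
  ultimately show ?thesis
    by (subst indep_vars_iff_distr_eq_PiM) (simp_all add: mu_def distr_id)
qed

definition zero_extend :: "int set \<Rightarrow> (int \<Rightarrow> bool) \<Rightarrow> int \<Rightarrow> bool" where
  "zero_extend A x = (\<lambda>j. j \<in> A \<and> x j)"

lemma zero_extend_measurable: "zero_extend A \<in> measurable (Pi\<^sub>M A (\<lambda>_. measure_pmf M)) Mfull"
proof (rule measurable_MfullI)
  fix j
  show "{x \<in> space (Pi\<^sub>M A (\<lambda>_. measure_pmf M)). zero_extend A x j} \<in> sets (Pi\<^sub>M A (\<lambda>_. measure_pmf M))"
  proof (cases "j \<in> A")
    case True
    have "(\<lambda>x. x j) -` {True} \<inter> space (Pi\<^sub>M A (\<lambda>_. measure_pmf M)) \<in> sets (Pi\<^sub>M A (\<lambda>_. measure_pmf M))"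
      by (rule measurable_sets[OF measurable_component_singleton[OF True]]) simp
    moreover have "{x \<in> space (Pi\<^sub>M A (\<lambda>_. measure_pmf M)). zero_extend A x j}
        = (\<lambda>x. x j) -` {True} \<inter> space (Pi\<^sub>M A (\<lambda>_. measure_pmf M))"
      using True by (auto simp: zero_extend_def)
    ultimately show ?thesis by simp
  qed (simp add: zero_extend_def)
qed

lemma integral_mu_mult_indep:
  fixes F G :: "(int \<Rightarrow> bool) \<Rightarrow> real"
  assumes "A \<inter> B = {}"
    and F: "\<And>x y. (\<And>j. j \<in> A \<Longrightarrow> x j = y j) \<Longrightarrow> F x = F y" "F \<in> borel_measurable Mfull" "\<And>x. \<bar>F x\<bar> \<le> c"
    and G: "\<And>x y. (\<And>j. j \<in> B \<Longrightarrow> x j = y j) \<Longrightarrow> G x = G y" "G \<in> borel_measurable Mfull" "\<And>x. \<bar>G x\<bar> \<le> d"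
  shows "(\<integral>x. F x * G x \<partial>mu p) = (\<integral>x. F x \<partial>mu p) * (\<integral>x. G x \<partial>mu p)"
proof -
  interpret prob_space "mu p" by (rule prob_space_mu)
  let ?M = "measure_pmf (bernoulli_pmf p)"
  have "indep_var (Pi\<^sub>M A (\<lambda>_. ?M)) (\<lambda>\<omega>. restrict (\<lambda>i. \<omega> i) A) (Pi\<^sub>M B (\<lambda>_. ?M)) (\<lambda>\<omega>. restrict (\<lambda>i. \<omega> i) B)"
    by (rule indep_var_restrict[OF indep_coords_mu assms(1)]) auto
  moreover have "(\<lambda>x. F (zero_extend A x)) \<in> borel_measurable (Pi\<^sub>M A (\<lambda>_. ?M))"
    using measurable_comp[OF zero_extend_measurable F(2)] by (simp add: comp_def)
  moreover have "(\<lambda>x. G (zero_extend B x)) \<in> borel_measurable (Pi\<^sub>M B (\<lambda>_. ?M))"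
    using measurable_comp[OF zero_extend_measurable G(2)] by (simp add: comp_def)
  ultimately have "indep_var borel ((\<lambda>x. F (zero_extend A x)) \<circ> (\<lambda>\<omega>. restrict (\<lambda>i. \<omega> i) A))
      borel ((\<lambda>x. G (zero_extend B x)) \<circ> (\<lambda>\<omega>. restrict (\<lambda>i. \<omega> i) B))"
    by (rule indep_var_compose)
  moreover have "(\<lambda>x. F (zero_extend A x)) \<circ> (\<lambda>\<omega>. restrict (\<lambda>i. \<omega> i) A) = F"
    by (rule ext) (simp add: comp_def, rule F(1), simp add: zero_extend_def)
  moreover have "(\<lambda>x. G (zero_extend B x)) \<circ> (\<lambda>\<omega>. restrict (\<lambda>i. \<omega> i) B) = G"
    by (rule ext) (simp add: comp_def, rule G(1), simp add: zero_extend_def)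
  ultimately have "indep_var borel F borel G" by simp
  then show ?thesis
    by (rule indep_var_lebesgue_integral[OF _ integrable_mu_bounded[OF F(2,3)]
          integrable_mu_bounded[OF G(2,3)]])
qed

lemma integral_mu_of_bool_conj_indep:
  assumes "A \<inter> B = {}" "finite A" "finite B"
    and "\<And>x y. (\<And>j. j \<in> A \<Longrightarrow> x j = y j) \<Longrightarrow> P x = P y"
    and "\<And>x y. (\<And>j. j \<in> B \<Longrightarrow> x j = y j) \<Longrightarrow> Q x = Q y"
  shows "(\<integral>x. of_bool (P x \<and> Q x) \<partial>mu p) = (\<integral>x. of_bool (P x) \<partial>mu p) * (\<integral>x. of_bool (Q x) \<partial>mu p :: real)"
proof -
  have "(\<integral>x. of_bool (P x) * of_bool (Q x) \<partial>mu p)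
      = (\<integral>x. of_bool (P x) \<partial>mu p) * (\<integral>x. of_bool (Q x) \<partial>mu p :: real)"
  proof (rule integral_mu_mult_indep[where c=1 and d=1, OF assms(1) _
        of_bool_Mfull_measurable[OF assms(2,4)] _ _ of_bool_Mfull_measurable[OF assms(3,5)]])
    show "of_bool (P x) = (of_bool (P y) :: real)" if "\<And>j. j \<in> A \<Longrightarrow> x j = y j" for x y
      using assms(4)[OF that] by simp
    show "of_bool (Q x) = (of_bool (Q y) :: real)" if "\<And>j. j \<in> B \<Longrightarrow> x j = y j" for x y
      using assms(5)[OF that] by simp
  qed (simp_all add: abs_of_nonneg)
  then show ?thesis by (simp add: of_bool_conj)
qed

definition pair_free :: "(int \<Rightarrow> bool) \<Rightarrow> int \<Rightarrow> nat \<Rightarrow> bool" where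
  "pair_free \<omega> a k \<longleftrightarrow> (\<forall>j. a \<le> j \<longrightarrow> j + 1 < a + int k \<longrightarrow> \<not> (\<omega> j \<and> \<omega> (j + 1)))"

lemma pair_free_cong:
  "(\<And>j. j \<in> {a..<a + int k} \<Longrightarrow> x j = y j) \<Longrightarrow> pair_free x a k = pair_free y a k"
  unfolding pair_free_def by (metis atLeastLessThan_iff less_add_one order.strict_trans le_add_same_cancel1
      zero_le_one add_increasing2)

lemma pair_free_measurable: "(\<lambda>\<omega>. of_bool (pair_free \<omega> a k) :: real) \<in> borel_measurable Mfull"
  by (rule of_bool_Mfull_measurable[of "{a..<a + int k}"]) (simp, rule pair_free_cong, simp)

lemma pair_free_Suc:
  "pair_free \<omega> a (Suc k) \<longleftrightarrow> pair_free \<omega> a k \<and> (1 \<le> k \<longrightarrow> \<not> (\<omega> (a + int k - 1) \<and> \<omega> (a + int k)))"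
proof
  assume h: "pair_free \<omega> a (Suc k)"
  then show "pair_free \<omega> a k \<and> (1 \<le> k \<longrightarrow> \<not> (\<omega> (a + int k - 1) \<and> \<omega> (a + int k)))"
    unfolding pair_free_def by (auto dest: spec[of _ "a + int k - 1"])
next
  assume h: "pair_free \<omega> a k \<and> (1 \<le> k \<longrightarrow> \<not> (\<omega> (a + int k - 1) \<and> \<omega> (a + int k)))"
  show "pair_free \<omega> a (Suc k)" unfolding pair_free_def
  proof (intro allI impI)
    fix j assume j: "a \<le> j" "j + 1 < a + int (Suc k)"
    show "\<not> (\<omega> j \<and> \<omega> (j + 1))"
    proof (cases "j + 1 < a + int k")
      case True
      then show ?thesis using h j unfolding pair_free_def by blast
    next
      case False
      then have "j = a + int k - 1" "1 \<le> k" using j by auto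
      then show ?thesis using h by simp
    qed
  qed
qed

lemma pair_free_conj_determined:
  assumes "\<And>x y. (\<And>j. j \<in> A \<Longrightarrow> x j = y j) \<Longrightarrow> Q x = Q y"
    and "\<And>j. j \<in> {a..<a + int k} \<union> A \<Longrightarrow> x j = y j"
  shows "(pair_free x a k \<and> Q x) = (pair_free y a k \<and> Q y)"
  using pair_free_cong[of a k x y] assms(1)[of x y] assms(2) by blast

lemma integral_pair_free_conj:
  assumes "{a..<a + int k} \<inter> A = {}" "finite A" "\<And>x y. (\<And>j. j \<in> A \<Longrightarrow> x j = y j) \<Longrightarrow> Q x = Q y"
  shows "(\<integral>\<omega>. of_bool (pair_free \<omega> a k \<and> Q \<omega>) \<partial>mu p)
    = (\<integral>\<omega>. of_bool (pair_free \<omega> a k) \<partial>mu p) * (\<integral>\<omega>. of_bool (Q \<omega>) \<partial>mu p :: real)"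
  by (rule integral_mu_of_bool_conj_indep[OF assms(1) _ assms(2) pair_free_cong assms(3)]) simp_all

lemma pair_free_conj_measurable:
  assumes "finite A" "\<And>x y. (\<And>j. j \<in> A \<Longrightarrow> x j = y j) \<Longrightarrow> Q x = Q y"
  shows "(\<lambda>\<omega>. of_bool (pair_free \<omega> a k \<and> Q \<omega>) :: real) \<in> borel_measurable Mfull"
  using assms(1)
  by (intro of_bool_Mfull_measurable[where S="{a..<a + int k} \<union> A"] pair_free_conj_determined[OF assms(2)])
    simp_all

lemma integrable_pair_free_conj:
  assumes "finite A" "\<And>x y. (\<And>j. j \<in> A \<Longrightarrow> x j = y j) \<Longrightarrow> Q x = Q y"
  shows "integrable (mu p) (\<lambda>\<omega>. of_bool (pair_free \<omega> a k \<and> Q \<omega>) :: real)"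
  by (rule integrable_mu_bounded[where B=1, OF pair_free_conj_measurable[OF assms]]) simp_all

context bernoulli_param
begin

lemma integral_mu_coord:
  "(\<integral>\<omega>. of_bool (\<omega> j) \<partial>mu p) = p" "(\<integral>\<omega>. of_bool (\<not> \<omega> j) \<partial>mu p) = 1 - p"
proof -
  interpret P: product_prob_space "\<lambda>_::int. measure_pmf (bernoulli_pmf p)" UNIV
    by (intro product_prob_spaceI measure_pmf.prob_space_axioms)
  have d: "distr (mu p) (measure_pmf (bernoulli_pmf p)) (\<lambda>\<omega>. \<omega> j) = measure_pmf (bernoulli_pmf p)"
    unfolding mu_def by (rule P.PiM_component) simp
  have m: "(\<lambda>\<omega>. \<omega> j) \<in> measurable (mu p) (measure_pmf (bernoulli_pmf p))"
    unfolding mu_def by (rule measurable_component_singleton) simp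
  show "(\<integral>\<omega>. of_bool (\<omega> j) \<partial>mu p) = p" "(\<integral>\<omega>. of_bool (\<not> \<omega> j) \<partial>mu p) = 1 - p"
    using integral_distr[OF m, of "\<lambda>b. of_bool b :: real"]
      integral_distr[OF m, of "\<lambda>b. of_bool (\<not> b) :: real"] p_pos p_less_1
    by (simp_all add: d)
qed


lemma integral_pair_free: "(\<integral>\<omega>. of_bool (pair_free \<omega> a k) \<partial>mu p) = no_pair_prob p k"
proof (induction k rule: induct_nat_012)
  case (ge2 k)
  let ?E = "\<lambda>P. (\<integral>\<omega>. of_bool (P \<omega>) \<partial>mu p) :: real"
  let ?x = "a + int k" and ?y = "a + int k + 1"
  have split: "of_bool (pair_free \<omega> a (Suc (Suc k)))
      = of_bool (pair_free \<omega> a (Suc k) \<and> \<not> \<omega> ?y) + (of_bool (pair_free \<omega> a k \<and> (\<not> \<omega> ?x \<and> \<omega> ?y)) :: real)"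
    for \<omega> :: "int \<Rightarrow> bool"
  proof -
    have "pair_free \<omega> a (Suc (Suc k)) \<longleftrightarrow> pair_free \<omega> a (Suc k) \<and> \<not> (\<omega> ?x \<and> \<omega> ?y)"
      using pair_free_Suc[of \<omega> a "Suc k"] by (simp add: algebra_simps)
    moreover have "\<not> \<omega> ?x \<Longrightarrow> pair_free \<omega> a (Suc k) \<longleftrightarrow> pair_free \<omega> a k"
      using pair_free_Suc[of \<omega> a k] by auto
    ultimately show ?thesis by (cases "\<omega> ?y"; cases "\<omega> ?x") simp_all
  qed
  have first: "?E (\<lambda>\<omega>. pair_free \<omega> a (Suc k) \<and> \<not> \<omega> ?y)
      = ?E (\<lambda>\<omega>. pair_free \<omega> a (Suc k)) * ?E (\<lambda>\<omega>. \<not> \<omega> ?y)"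
    by (rule integral_pair_free_conj[where A="{?y}"]) simp_all
  have second: "?E (\<lambda>\<omega>. pair_free \<omega> a k \<and> (\<not> \<omega> ?x \<and> \<omega> ?y))
      = ?E (\<lambda>\<omega>. pair_free \<omega> a k) * ?E (\<lambda>\<omega>. \<not> \<omega> ?x \<and> \<omega> ?y)"
    by (rule integral_pair_free_conj[where A="{?x, ?y}"]) simp_all
  have "?E (\<lambda>\<omega>. \<not> \<omega> ?x \<and> \<omega> ?y) = ?E (\<lambda>\<omega>. \<not> \<omega> ?x) * ?E (\<lambda>\<omega>. \<omega> ?y)"
    by (rule integral_mu_of_bool_conj_indep[where A="{?x}" and B="{?y}"]) simp_all
  then have third: "?E (\<lambda>\<omega>. \<not> \<omega> ?x \<and> \<omega> ?y) = (1 - p) * p"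
    by (simp only: integral_mu_coord)
  have "?E (\<lambda>\<omega>. pair_free \<omega> a (Suc (Suc k)))
      = ?E (\<lambda>\<omega>. pair_free \<omega> a (Suc k) \<and> \<not> \<omega> ?y) + ?E (\<lambda>\<omega>. pair_free \<omega> a k \<and> (\<not> \<omega> ?x \<and> \<omega> ?y))"
    unfolding split by (intro Bochner_Integration.integral_add integrable_pair_free_conj[of "{?x, ?y}"]) auto
  also have "\<dots> = no_pair_prob p (Suc k) * (1 - p) + no_pair_prob p k * ((1 - p) * p)"
    by (simp only: first second third ge2 integral_mu_coord)
  also have "\<dots> = no_pair_prob p (Suc (Suc k))"
    by (simp add: algebra_simps)
  finally show ?case .
qed (simp_all add: pair_free_def)

end

lemma space_mu' [simp]: "space (mu' p) = Omega'"
  unfolding mu'_def by simp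

lemma sets_mu' [measurable_cong]: "sets (mu' p) = sets F'"
  unfolding mu'_def by simp

lemma Tmap_measurable_mu: "Tmap \<in> measurable (mu p) F'"
  using Tmap_measurable_F' by (simp cong: measurable_cong_sets[OF sets_mu])

lemma integrable_mu'_bounded:
  fixes f :: "(int \<Rightarrow> bool) \<Rightarrow> real"
  assumes "f \<in> borel_measurable F'" "\<And>x. \<bar>f x\<bar> \<le> B"
  shows "integrable (mu' p) f"
proof -
  interpret prob_space "mu' p"
    unfolding mu'_def by (rule prob_space.prob_space_distr[OF prob_space_mu Tmap_measurable_mu])
  show ?thesis
    using assms by (intro integrable_const_bound[where B=B]) (auto cong: measurable_cong_sets[OF sets_mu'])
qed

lemma of_bool_coord_measurable_F': "(\<lambda>\<sigma>. of_bool (\<not> \<sigma> i) :: real) \<in> borel_measurable F'"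
  unfolding F'_def by (rule measurable_restrict_space1, rule of_bool_Mfull_measurable[of "{i}"]) simp_all

section \<open>Single-site consistency\<close>

lemma Tmap_apply: "Tmap w x \<longleftrightarrow> w x \<and> (w (x - 1) \<or> w (x + 1))"
  unfolding Tmap_def ..

lemma nfun_shift_eq_enat_iff:
  assumes "admissible w" "1 \<le> n"
  shows "nfun (shift i w) = enat n
    \<longleftrightarrow> w (i - int n - 1) \<and> w (i - int n) \<and> (\<forall>x. i - int n < x \<and> x < i \<longrightarrow> \<not> w x)"
proof -
  have "(\<forall>x. - int n < x \<and> x < 0 \<longrightarrow> \<not> w (x + i)) \<longleftrightarrow> (\<forall>x. i - int n < x \<and> x < i \<longrightarrow> \<not> w x)"
  proof (intro iffI allI impI)
    fix x assume "\<forall>x. - int n < x \<and> x < 0 \<longrightarrow> \<not> w (x + i)" "i - int n < x \<and> x < i"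
    then show "\<not> w x" by (auto dest: spec[of _ "x - i"])
  qed auto
  then show ?thesis
    using nfun_eq_enat_iff_admissible[of "shift i w" n] assms by (simp add: algebra_simps)
qed

lemma nfun_Tmap_eq_1_iff: "nfun (shift i (Tmap w)) = enat 1 \<longleftrightarrow> w (i - 2) \<and> w (i - 1)"
  using nfun_shift_eq_enat_iff[OF admissible_Tmap, of 1 i w] by (auto simp: Tmap_apply)

lemma Tmap_free_interval_iff:
  assumes "2 \<le> n" "w (i - int n)"
  shows "(\<forall>x. i - int n < x \<and> x < i \<longrightarrow> \<not> Tmap w x)
    \<longleftrightarrow> \<not> w (i - int n + 1) \<and> pair_free w (i - int n + 2) (n - 1)"
proof
  assume free: "\<forall>x. i - int n < x \<and> x < i \<longrightarrow> \<not> Tmap w x"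
  then have "\<not> w (i - int n + 1)"
    using free[rule_format, of "i - int n + 1"] assms by (simp add: Tmap_apply)
  moreover have "pair_free w (i - int n + 2) (n - 1)"
    unfolding pair_free_def
  proof (intro allI impI)
    fix j assume "i - int n + 2 \<le> j" "j + 1 < i - int n + 2 + int (n - 1)"
    then have "\<not> Tmap w j" using free assms(1) by auto
    then show "\<not> (w j \<and> w (j + 1))" by (auto simp: Tmap_apply)
  qed
  ultimately show "\<not> w (i - int n + 1) \<and> pair_free w (i - int n + 2) (n - 1)" ..
next
  assume h: "\<not> w (i - int n + 1) \<and> pair_free w (i - int n + 2) (n - 1)"
  then have no_pair: "\<not> (w j \<and> w (j + 1))" if "i - int n + 1 \<le> j" "j < i" for j
    using that assms(1) unfolding pair_free_def by (cases "j = i - int n + 1") auto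
  show "\<forall>x. i - int n < x \<and> x < i \<longrightarrow> \<not> Tmap w x"
  proof (intro allI impI)
    fix x assume x: "i - int n < x \<and> x < i"
    show "\<not> Tmap w x"
    proof (cases "x = i - int n + 1")
      case True
      then show ?thesis using h by (simp add: Tmap_apply)
    next
      case False
      then show ?thesis using no_pair[of x] no_pair[of "x - 1"] x by (auto simp: Tmap_apply)
    qed
  qed
qed

lemma nfun_Tmap_eq_enat_iff:
  assumes "2 \<le> n"
  shows "nfun (shift i (Tmap w)) = enat n
    \<longleftrightarrow> w (i - int n - 1) \<and> w (i - int n) \<and> \<not> w (i - int n + 1) \<and> pair_free w (i - int n + 2) (n - 1)"
proof -
  have "Tmap w (i - int n - 1) \<and> Tmap w (i - int n) \<longleftrightarrow> w (i - int n - 1) \<and> w (i - int n)"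
    by (auto simp: Tmap_apply)
  then show ?thesis
    using nfun_shift_eq_enat_iff[OF admissible_Tmap, of n i w] Tmap_free_interval_iff[OF assms, of w i] assms
    by auto
qed

lemma not_Tmap_iff_pair_free:
  assumes "2 \<le> n" "\<not> w (i - int n + 1)" "pair_free w (i - int n + 2) (n - 1)"
  shows "\<not> Tmap w i \<longleftrightarrow> pair_free w (i - int n + 2) n"
proof -
  have "pair_free w (i - int n + 2) n \<longleftrightarrow> pair_free w (i - int n + 2) (n - 1) \<and> \<not> (w i \<and> w (i + 1))"
  proof -
    have "Suc (n - 1) = n" "1 \<le> n - 1" using assms(1) by auto
    then show ?thesis using pair_free_Suc[of w "i - int n + 2" "n - 1"] by (simp add: of_nat_diff)
  qed
  moreover have "\<not> (w (i - 1) \<and> w i)"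
  proof (cases "n = 2")
    case True
    then show ?thesis using assms(2) by simp
  next
    case False
    then show ?thesis
      using assms(1,3) unfolding pair_free_def by (auto dest: spec[of _ "i - 1"] simp: of_nat_diff)
  qed
  ultimately show ?thesis using assms(3) by (auto simp: Tmap_apply)
qed

definition truncate :: "int \<Rightarrow> (int \<Rightarrow> bool) \<Rightarrow> int \<Rightarrow> bool" where
  "truncate a w = (\<lambda>j. j \<le> a \<and> w j)"

lemma truncate_measurable: "truncate a \<in> measurable Mfull Mfull"
  by (rule measurable_MfullI) (simp add: truncate_def sets_Mfull_coord[simplified] Collect_conj_eq)

lemma Tmap_truncate:
  assumes "w (a - 1)" "w a" "\<forall>x. a < x \<and> x < i \<longrightarrow> \<not> Tmap w x" "x < i"
  shows "Tmap (truncate a w) x = Tmap w x"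
proof -
  consider "x < a" | "x = a" | "a < x" by linarith
  then show ?thesis
    by cases (use assms in \<open>auto simp: Tmap_apply truncate_def\<close>)
qed

lemma nfun_Tmap_tail:
  assumes "\<not> nfun (shift i (Tmap w)) \<le> enat K"
  shows "pair_free w (i - int K - 1) (K + 1)"
  unfolding pair_free_def
proof (intro allI impI notI)
  fix j assume j: "i - int K - 1 \<le> j" "j + 1 < i - int K - 1 + int (K + 1)" and "w j \<and> w (j + 1)"
  define k where "k = nat (i - j - 1)"
  have k: "- int k - 1 + i = j" "- int k + i = j + 1" "1 \<le> k" "k \<le> K" using j by (auto simp: k_def)
  have "shift i (Tmap w) (- int k - 1)" "shift i (Tmap w) (- int k)"
    using \<open>w j \<and> w (j + 1)\<close> by (simp_all only: shift_apply k(1,2)) (simp_all add: Tmap_apply)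
  then have "nfun (shift i (Tmap w)) \<le> enat K"
    using nfun_le_enat[OF k(3)] k(4) by (meson enat_ord_simps(1) order_trans)
  with assms show False ..
qed

lemma integral_mu_indep_cancel:
  fixes P G1 G0 :: "(int \<Rightarrow> bool) \<Rightarrow> real"
  assumes "A \<inter> B = {}"
    and P: "\<And>x y. (\<And>j. j \<in> A \<Longrightarrow> x j = y j) \<Longrightarrow> P x = P y" "P \<in> borel_measurable Mfull" "\<And>x. \<bar>P x\<bar> \<le> c"
    and G1: "\<And>x y. (\<And>j. j \<in> B \<Longrightarrow> x j = y j) \<Longrightarrow> G1 x = G1 y" "G1 \<in> borel_measurable Mfull" "\<And>x. \<bar>G1 x\<bar> \<le> 1"
    and G0: "\<And>x y. (\<And>j. j \<in> B \<Longrightarrow> x j = y j) \<Longrightarrow> G0 x = G0 y" "G0 \<in> borel_measurable Mfull" "\<And>x. \<bar>G0 x\<bar> \<le> 1"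
    and "(\<integral>\<omega>. G1 \<omega> \<partial>mu p) = r * (\<integral>\<omega>. G0 \<omega> \<partial>mu p)"
  shows "(\<integral>\<omega>. P \<omega> * (G1 \<omega> - r * G0 \<omega>) \<partial>mu p) = 0"
proof -
  have c: "0 \<le> c" using P(3)[of undefined] by simp
  have bound: "\<bar>P x * G x\<bar> \<le> c" if "\<And>x. \<bar>G x\<bar> \<le> 1" for G x
    using mult_mono[OF P(3) that c] by (simp add: abs_mult)
  have "integrable (mu p) (\<lambda>\<omega>. P \<omega> * G1 \<omega>)" "integrable (mu p) (\<lambda>\<omega>. P \<omega> * G0 \<omega>)"
    using P(2) G1(2) G0(2)
    by (intro integrable_mu_bounded[where B=c] borel_measurable_times bound[of G1, OF G1(3)]
        bound[of G0, OF G0(3)]; simp)+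
  then have "(\<integral>\<omega>. P \<omega> * (G1 \<omega> - r * G0 \<omega>) \<partial>mu p)
      = (\<integral>\<omega>. P \<omega> * G1 \<omega> \<partial>mu p) - r * (\<integral>\<omega>. P \<omega> * G0 \<omega> \<partial>mu p)"
    by (simp add: right_diff_distrib mult.left_commute)
  also have "\<dots> = 0"
    using integral_mu_mult_indep[OF assms(1) P G1] integral_mu_mult_indep[OF assms(1) P G0] assms(11)
    by simp
  finally show ?thesis .
qed

locale single_site = bernoulli_param +
  fixes i :: int and h :: "(int \<Rightarrow> bool) \<Rightarrow> real" and B :: real
  assumes h_measurable: "h \<in> borel_measurable (Fle (i - 1))" and h_bounded: "\<And>x. \<bar>h x\<bar> \<le> B"
begin

definition defect :: "(int \<Rightarrow> bool) \<Rightarrow> real" where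
  "defect \<omega> = h (Tmap \<omega>) * (of_bool (\<not> Tmap \<omega> i) - empty_prob p i (Tmap \<omega>))"

abbreviation pair_dist :: "(int \<Rightarrow> bool) \<Rightarrow> enat" where
  "pair_dist \<omega> \<equiv> nfun (shift i (Tmap \<omega>))"

lemma B_nonneg: "0 \<le> B"
  using h_bounded[of undefined] by simp

lemma h_Tmap_measurable: "(\<lambda>\<omega>. h (Tmap \<omega>)) \<in> borel_measurable Mfull"
  using measurable_compose[OF Tmap_measurable_Fle h_measurable] .

lemma defect_measurable: "defect \<in> borel_measurable Mfull"
proof -
  have "(\<lambda>\<omega>. of_bool (\<not> Tmap \<omega> i) :: real) \<in> borel_measurable Mfull"
    by (rule of_bool_Mfull_measurable[of "{i - 1, i, i + 1}"]) (simp_all add: Tmap_def)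
  moreover have "(\<lambda>\<omega>. empty_prob p i (Tmap \<omega>)) \<in> borel_measurable Mfull"
    using measurable_compose[OF Tmap_measurable_Fle empty_prob_measurable] .
  ultimately show ?thesis
    unfolding defect_def[abs_def] using h_Tmap_measurable by measurable
qed

lemma defect_bounded: "\<bar>defect \<omega>\<bar> \<le> B"
proof -
  have "\<bar>of_bool (\<not> Tmap \<omega> i) - empty_prob p i (Tmap \<omega>)\<bar> \<le> 1"
    using empty_prob_range[of i "Tmap \<omega>"] by auto
  then have "\<bar>h (Tmap \<omega>)\<bar> * \<bar>of_bool (\<not> Tmap \<omega> i) - empty_prob p i (Tmap \<omega>)\<bar> \<le> B * 1"
    by (intro mult_mono h_bounded B_nonneg) simp_all
  then show ?thesis by (simp add: defect_def abs_mult)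
qed

lemma integrable_defect_times_of_bool:
  "integrable (mu p) (\<lambda>\<omega>. defect \<omega> * of_bool (Q (pair_dist \<omega>)))"
proof (rule integrable_mu_bounded[where B=B])
  have "(\<lambda>\<omega>. pair_dist \<omega>) \<in> measurable Mfull (count_space UNIV)"
    using measurable_compose[OF Tmap_measurable_Fle nfun_shift_measurable] .
  then show "(\<lambda>\<omega>. defect \<omega> * of_bool (Q (pair_dist \<omega>))) \<in> borel_measurable Mfull"
    using defect_measurable by measurable
  show "\<bar>defect \<omega> * of_bool (Q (pair_dist \<omega>))\<bar> \<le> B" for \<omega>
    using defect_bounded[of \<omega>] B_nonneg by (simp add: abs_mult)
qed

text \<open>On \<open>n(T \<omega>) = n \<ge> 1\<close> the past of \<open>T \<omega>\<close> before \<open>i\<close> depends on \<open>\<omega>\<close> only up to the site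
  \<open>a = i - n\<close> closing the nearest pair.\<close>
definition past_factor :: "int \<Rightarrow> (int \<Rightarrow> bool) \<Rightarrow> real" where
  "past_factor a \<omega> = h (Tmap (truncate a \<omega>)) * of_bool (\<omega> (a - 1) \<and> \<omega> a)"

lemma past_factor_determined: "(\<And>j. j \<in> {..a} \<Longrightarrow> x j = y j) \<Longrightarrow> past_factor a x = past_factor a y"
proof -
  assume agree: "\<And>j. j \<in> {..a} \<Longrightarrow> x j = y j"
  then have "truncate a x = truncate a y" by (auto simp: truncate_def fun_eq_iff)
  moreover have "x (a - 1) = y (a - 1)" "x a = y a" using agree by simp_all
  ultimately show ?thesis unfolding past_factor_def by simp
qed

lemma past_factor_measurable: "past_factor a \<in> borel_measurable Mfull"
proof -
  have "(\<lambda>\<omega>. h (Tmap (truncate a \<omega>))) \<in> borel_measurable Mfull"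
    using measurable_compose[OF truncate_measurable h_Tmap_measurable] .
  moreover have "(\<lambda>\<omega>. of_bool (\<omega> (a - 1) \<and> \<omega> a) :: real) \<in> borel_measurable Mfull"
    by (rule of_bool_Mfull_measurable[of "{a - 1, a}"]) auto
  ultimately show ?thesis unfolding past_factor_def[abs_def] by measurable
qed

lemma past_factor_bounded: "\<bar>past_factor a \<omega>\<bar> \<le> B"
  unfolding past_factor_def using h_bounded B_nonneg by (simp add: abs_mult)

lemma past_factor_eq:
  assumes "\<omega> (a - 1)" "\<omega> a" "\<forall>x. a < x \<and> x < i \<longrightarrow> \<not> Tmap \<omega> x"
  shows "past_factor a \<omega> = h (Tmap \<omega>)"
proof -
  have "h (Tmap (truncate a \<omega>)) = h (Tmap \<omega>)"
    by (rule borel_measurable_Fle_determined[OF h_measurable _ admissible_Tmap admissible_Tmap])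
      (use Tmap_truncate[OF assms] in simp)
  then show ?thesis by (simp add: past_factor_def assms(1,2))
qed


lemma defect_pair_dist_0: "defect \<omega> * of_bool (pair_dist \<omega> = 0) = 0"
proof (cases "pair_dist \<omega> = 0")
  case True
  then have "\<not> Tmap \<omega> (i - 2) \<and> Tmap \<omega> (i - 1)"
    using nfun_eq_0_iff[of "shift i (Tmap \<omega>)"] by (simp add: algebra_simps)
  then have "Tmap \<omega> i"
    using admissibleD[OF admissible_Tmap, of \<omega> "i - 1"] by simp
  moreover have "empty_prob p i (Tmap \<omega>) = 0"
    using True by (simp add: empty_prob_def gp_def zero_enat_def)
  ultimately show ?thesis by (simp add: defect_def)
qed simp

lemma integral_defect_pair_dist_1: "(\<integral>\<omega>. defect \<omega> * of_bool (pair_dist \<omega> = enat 1) \<partial>mu p) = 0"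
proof -
  have "defect \<omega> * of_bool (pair_dist \<omega> = enat 1)
      = past_factor (i - 1) \<omega> * (of_bool (\<not> \<omega> i) - (1 - p) * 1)"
    for \<omega>
  proof (cases "\<omega> (i - 2) \<and> \<omega> (i - 1)")
    case True
    then have "past_factor (i - 1) \<omega> = h (Tmap \<omega>)"
      by (intro past_factor_eq) auto
    moreover have "empty_prob p i (Tmap \<omega>) = 1 - p" "Tmap \<omega> i = \<omega> i"
      using True nfun_Tmap_eq_1_iff[of i \<omega>] by (simp_all add: empty_prob_def gp_def one_enat_def Tmap_apply)
    ultimately show ?thesis
      using True nfun_Tmap_eq_1_iff[of i \<omega>] by (simp add: defect_def)
  next
    case False
    moreover have "i - 1 - 1 = i - 2" by simp
    ultimately show ?thesis using nfun_Tmap_eq_1_iff[of i \<omega>] by (simp add: past_factor_def)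
  qed
  moreover have "(\<integral>\<omega>. past_factor (i - 1) \<omega> * (of_bool (\<not> \<omega> i) - (1 - p) * 1) \<partial>mu p) = 0"
  proof (rule integral_mu_indep_cancel[where A="{..i - 1}" and B="{i}"])
    show "(\<integral>\<omega>. of_bool (\<not> \<omega> i) \<partial>mu p) = (1 - p) * (\<integral>\<omega>. 1 \<partial>mu p)"
      by (simp add: integral_mu_coord)
  qed (auto intro: past_factor_determined past_factor_measurable past_factor_bounded
        of_bool_Mfull_measurable[of "{i}"])
  ultimately show ?thesis by simp
qed

lemma integral_defect_pair_dist_ge_2:
  assumes "2 \<le> n"
  shows "(\<integral>\<omega>. defect \<omega> * of_bool (pair_dist \<omega> = enat n) \<partial>mu p) = 0"
proof -
  define a where "a = i - int n"
  let ?G1 = "\<lambda>\<omega>. of_bool (pair_free \<omega> (a + 2) n \<and> \<not> \<omega> (a + 1)) :: real"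
  let ?G0 = "\<lambda>\<omega>. of_bool (pair_free \<omega> (a + 2) (n - 1) \<and> \<not> \<omega> (a + 1)) :: real"
  have pf_mono: "pair_free \<omega> (a + 2) n \<Longrightarrow> pair_free \<omega> (a + 2) (n - 1)" for \<omega>
    using pair_free_Suc[of \<omega> "a + 2" "n - 1"] assms by (simp add: Suc_diff_Suc numeral_2_eq_2)
  have "defect \<omega> * of_bool (pair_dist \<omega> = enat n)
      = past_factor a \<omega> * (?G1 \<omega> - gp p (enat n) * ?G0 \<omega>)" for \<omega>
  proof (cases "pair_dist \<omega> = enat n")
    case True
    then have ev: "\<omega> (a - 1)" "\<omega> a" "\<not> \<omega> (a + 1)" "pair_free \<omega> (a + 2) (n - 1)"
      using nfun_Tmap_eq_enat_iff[OF assms] by (auto simp: a_def)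
    have "past_factor a \<omega> = h (Tmap \<omega>)"
      using True assms nfun_shift_eq_enat_iff[OF admissible_Tmap, of n i \<omega>] ev(1,2)
      by (intro past_factor_eq) (auto simp: a_def)
    moreover have "\<not> Tmap \<omega> i \<longleftrightarrow> pair_free \<omega> (a + 2) n"
      using not_Tmap_iff_pair_free[OF assms] ev(3,4) by (simp add: a_def)
    ultimately show ?thesis using True ev by (simp add: defect_def empty_prob_def)
  next
    case False
    then have "\<not> (\<omega> (a - 1) \<and> \<omega> a \<and> \<not> \<omega> (a + 1) \<and> pair_free \<omega> (a + 2) (n - 1))"
      using nfun_Tmap_eq_enat_iff[OF assms] by (simp add: a_def)
    then show ?thesis using False pf_mono[of \<omega>] by (auto simp: past_factor_def)
  qed
  moreover have "(\<integral>\<omega>. past_factor a \<omega> * (?G1 \<omega> - gp p (enat n) * ?G0 \<omega>) \<partial>mu p) = 0"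
  proof (rule integral_mu_indep_cancel[where A="{..a}" and B="{a + 1..}"])
    have G_det: "(pair_free x (a + 2) k \<and> \<not> x (a + 1)) = (pair_free y (a + 2) k \<and> \<not> y (a + 1))"
      if "\<And>j. j \<in> {a + 1..} \<Longrightarrow> x j = y j" for x y :: "int \<Rightarrow> bool" and k
      by (rule pair_free_conj_determined[of "{a + 1}"]) (use that in auto)
    show "?G1 x = ?G1 y" "?G0 x = ?G0 y" if "\<And>j. j \<in> {a + 1..} \<Longrightarrow> x j = y j" for x y
      using G_det[of x y n, OF that] G_det[of x y "n - 1", OF that] by simp_all
    show "?G1 \<in> borel_measurable Mfull" "?G0 \<in> borel_measurable Mfull"
      by (rule pair_free_conj_measurable[of "{a + 1}"]; simp)+
    have "(\<integral>\<omega>. ?G1 \<omega> \<partial>mu p) = no_pair_prob p n * (1 - p)"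
      "(\<integral>\<omega>. ?G0 \<omega> \<partial>mu p) = no_pair_prob p (n - 1) * (1 - p)"
      by (subst integral_pair_free_conj[where A="{a + 1}"]; simp add: integral_pair_free integral_mu_coord)+
    then show "(\<integral>\<omega>. ?G1 \<omega> \<partial>mu p) = gp p (enat n) * (\<integral>\<omega>. ?G0 \<omega> \<partial>mu p)"
      using gp_eq_no_pair_ratio[OF assms] no_pair_prob_pos[of "n - 1"] by simp
  qed (auto intro: past_factor_determined past_factor_measurable past_factor_bounded)
  ultimately show ?thesis by simp
qed


lemma integral_defect_pair_dist_eq: "(\<integral>\<omega>. defect \<omega> * of_bool (pair_dist \<omega> = enat n) \<partial>mu p) = 0"
proof -
  consider "n = 0" | "n = 1" | "2 \<le> n" by linarith
  then show ?thesis
  proof cases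
    case 1
    have "(\<lambda>\<omega>. defect \<omega> * of_bool (pair_dist \<omega> = enat 0)) = (\<lambda>_. 0)"
      by (intro ext) (rule defect_pair_dist_0[unfolded zero_enat_def])
    then show ?thesis using 1 by simp
  next
    case 2
    then show ?thesis by (simp only: integral_defect_pair_dist_1)
  next
    case 3
    then show ?thesis by (rule integral_defect_pair_dist_ge_2)
  qed
qed

lemma integral_defect_pair_dist_le: "(\<integral>\<omega>. defect \<omega> * of_bool (pair_dist \<omega> \<le> enat K) \<partial>mu p) = 0"
proof (induction K)
  case 0
  have "(\<lambda>\<omega>. defect \<omega> * of_bool (pair_dist \<omega> \<le> enat 0)) = (\<lambda>_. 0)"
    by (intro ext) (simp only: defect_pair_dist_0 zero_enat_def[symmetric] le_zero_eq)
  then show ?case by (simp only:) simp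
next
  case (Suc K)
  have "of_bool (pair_dist \<omega> \<le> enat (Suc K))
      = of_bool (pair_dist \<omega> \<le> enat K) + (of_bool (pair_dist \<omega> = enat (Suc K)) :: real)"
    for \<omega>
    by (cases "pair_dist \<omega>") auto
  then have "(\<lambda>\<omega>. defect \<omega> * of_bool (pair_dist \<omega> \<le> enat (Suc K)))
      = (\<lambda>\<omega>. defect \<omega> * of_bool (pair_dist \<omega> \<le> enat K) + defect \<omega> * of_bool (pair_dist \<omega> = enat (Suc K)))"
    by (simp add: fun_eq_iff distrib_left)
  then show ?case
    using Bochner_Integration.integral_add[OF integrable_defect_times_of_bool[of "\<lambda>d. d \<le> enat K"]
        integrable_defect_times_of_bool[of "\<lambda>d. d = enat (Suc K)"]]
    by (simp only: Suc.IH integral_defect_pair_dist_eq)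
qed

lemma integral_defect_tail: "\<bar>\<integral>\<omega>. defect \<omega> \<partial>mu p\<bar> \<le> B * no_pair_prob p (K + 1)"
proof -
  let ?far = "\<lambda>\<omega>. of_bool (\<not> pair_dist \<omega> \<le> enat K) :: real"
  have "(\<integral>\<omega>. defect \<omega> \<partial>mu p)
      = (\<integral>\<omega>. defect \<omega> * of_bool (pair_dist \<omega> \<le> enat K) + defect \<omega> * ?far \<omega> \<partial>mu p)"
    by (intro Bochner_Integration.integral_cong) auto
  also have "\<dots> = (\<integral>\<omega>. defect \<omega> * ?far \<omega> \<partial>mu p)"
    using integral_defect_pair_dist_le[of K]
    using Bochner_Integration.integral_add[OF integrable_defect_times_of_bool[of "\<lambda>d. d \<le> enat K"]
        integrable_defect_times_of_bool[of "\<lambda>d. \<not> d \<le> enat K"]]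
    by (simp only:)
  finally have "\<bar>\<integral>\<omega>. defect \<omega> \<partial>mu p\<bar> \<le> (\<integral>\<omega>. \<bar>defect \<omega> * ?far \<omega>\<bar> \<partial>mu p)"
    by (simp only: integral_abs_bound)
  also have "\<dots> \<le> (\<integral>\<omega>. B * of_bool (pair_free \<omega> (i - int K - 1) (K + 1)) \<partial>mu p)"
  proof (rule integral_mono)
    show "integrable (mu p) (\<lambda>\<omega>. \<bar>defect \<omega> * ?far \<omega>\<bar>)"
      by (rule integrable_abs[OF integrable_defect_times_of_bool])
    show "integrable (mu p) (\<lambda>\<omega>. B * of_bool (pair_free \<omega> (i - int K - 1) (K + 1)))"
      by (intro integrable_mult_right integrable_mu_bounded[where B=1] pair_free_measurable) simp
    show "\<bar>defect \<omega> * ?far \<omega>\<bar> \<le> B * of_bool (pair_free \<omega> (i - int K - 1) (K + 1))" for \<omega>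
      using defect_bounded[of \<omega>] B_nonneg nfun_Tmap_tail[of i \<omega> K] by (auto simp: abs_mult)
  qed
  also have "\<dots> = B * no_pair_prob p (K + 1)"
    by (simp add: integral_pair_free)
  finally show ?thesis .
qed

lemma integral_defect: "(\<integral>\<omega>. defect \<omega> \<partial>mu p) = 0"
proof -
  have "(\<lambda>K. B * no_pair_prob p (K + 1)) \<longlonglongrightarrow> B * 0"
    using LIMSEQ_Suc[OF no_pair_prob_tendsto_0] by (intro tendsto_intros) simp
  then have "\<bar>\<integral>\<omega>. defect \<omega> \<partial>mu p\<bar> \<le> B * 0"
    by (rule LIMSEQ_le_const) (use integral_defect_tail in auto)
  then show ?thesis by simp
qed


lemma integrable_mu'_h_times:
  assumes "g \<in> borel_measurable F'" "\<And>\<sigma>. \<bar>g \<sigma>\<bar> \<le> 1"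
  shows "integrable (mu' p) (\<lambda>\<sigma>. h \<sigma> * g \<sigma>)"
proof (rule integrable_mu'_bounded[where B=B])
  show "(\<lambda>\<sigma>. h \<sigma> * g \<sigma>) \<in> borel_measurable F'"
    using borel_measurable_Fle_F'[OF h_measurable] assms(1) by (rule borel_measurable_times)
  show "\<bar>h \<sigma> * g \<sigma>\<bar> \<le> B" for \<sigma>
    using mult_mono[OF h_bounded assms(2) B_nonneg] by (simp add: abs_mult)
qed

text \<open>That is, \<open>g_p(n)\<close> is the conditional probability under \<open>\<mu>'_p\<close> of an empty site \<open>i\<close>
  given the past.\<close>
lemma integral_mu'_empty:
  "(\<integral>\<sigma>. h \<sigma> * of_bool (\<not> \<sigma> i) \<partial>mu' p) = (\<integral>\<sigma>. h \<sigma> * empty_prob p i \<sigma> \<partial>mu' p)"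
proof -
  have eF: "empty_prob p i \<in> borel_measurable F'" by (rule borel_measurable_Fle_F'[OF empty_prob_measurable])
  note sF = of_bool_coord_measurable_F'[of i]
  have dF: "(\<lambda>\<sigma>. h \<sigma> * (of_bool (\<not> \<sigma> i) - empty_prob p i \<sigma>)) \<in> borel_measurable F'"
    using borel_measurable_Fle_F'[OF h_measurable] eF sF by (intro borel_measurable_times borel_measurable_diff)
  have "(\<integral>\<sigma>. h \<sigma> * of_bool (\<not> \<sigma> i) \<partial>mu' p) - (\<integral>\<sigma>. h \<sigma> * empty_prob p i \<sigma> \<partial>mu' p)
      = (\<integral>\<sigma>. h \<sigma> * (of_bool (\<not> \<sigma> i) - empty_prob p i \<sigma>) \<partial>mu' p)"
    using integrable_mu'_h_times[OF sF] integrable_mu'_h_times[OF eF] empty_prob_range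
    by (simp add: right_diff_distrib)
  also have "\<dots> = (\<integral>\<omega>. defect \<omega> \<partial>mu p)"
    unfolding mu'_def defect_def by (rule integral_distr[OF Tmap_measurable_mu dF])
  also have "\<dots> = 0" by (rule integral_defect)
  finally show ?thesis by simp
qed

end

context bernoulli_param
begin

lemma integral_rho_singleton_mu':
  fixes f :: "(int \<Rightarrow> bool) \<Rightarrow> real"
  assumes f: "f \<in> borel_measurable (Fle i)" "\<And>x. \<bar>f x\<bar> \<le> B"
  shows "(\<integral>\<omega>. integral\<^sup>L (rho p i i \<omega>) f \<partial>mu' p) = (\<integral>\<omega>. f \<omega> \<partial>mu' p)"
proof -
  define f1 f0 where "f1 \<sigma> = f (extend i \<sigma> True)" and "f0 \<sigma> = f (extend i \<sigma> False)" for \<sigma>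
  have meas: "f1 \<in> borel_measurable (Fle (i - 1))" "f0 \<in> borel_measurable (Fle (i - 1))"
    using measurable_compose[OF extend_measurable f(1)] by (simp_all add: f1_def[abs_def] f0_def[abs_def])
  interpret single_site p i "\<lambda>\<sigma>. f0 \<sigma> - f1 \<sigma>" "2 * B"
  proof
    show "(\<lambda>\<sigma>. f0 \<sigma> - f1 \<sigma>) \<in> borel_measurable (Fle (i - 1))" using meas by measurable
    show "\<bar>f0 \<sigma> - f1 \<sigma>\<bar> \<le> 2 * B" for \<sigma>
      using f(2)[of "extend i \<sigma> False"] f(2)[of "extend i \<sigma> True"] by (simp add: f1_def f0_def)
  qed
  let ?D = "\<lambda>\<sigma>. f0 \<sigma> - f1 \<sigma>"
  have "\<bar>f1 \<sigma>\<bar> \<le> B" for \<sigma>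
    unfolding f1_def by (rule f(2))
  then have int_f1: "integrable (mu' p) f1"
    using meas(1) by (intro integrable_mu'_bounded[where B=B] borel_measurable_Fle_F')
  have "(\<integral>\<omega>. integral\<^sup>L (rho p i i \<omega>) f \<partial>mu' p) = (\<integral>\<sigma>. f1 \<sigma> + ?D \<sigma> * empty_prob p i \<sigma> \<partial>mu' p)"
    by (intro Bochner_Integration.integral_cong)
      (auto simp: integral_rho_singleton[OF f(1)] f1_def f0_def algebra_simps)
  also have "\<dots> = (\<integral>\<sigma>. f1 \<sigma> \<partial>mu' p) + (\<integral>\<sigma>. ?D \<sigma> * empty_prob p i \<sigma> \<partial>mu' p)"
    using integrable_mu'_h_times[OF borel_measurable_Fle_F'[OF empty_prob_measurable]] empty_prob_range int_f1
    by simp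
  also have "\<dots> = (\<integral>\<sigma>. f1 \<sigma> \<partial>mu' p) + (\<integral>\<sigma>. ?D \<sigma> * of_bool (\<not> \<sigma> i) \<partial>mu' p)"
    by (simp only: integral_mu'_empty)
  also have "\<dots> = (\<integral>\<sigma>. f1 \<sigma> + ?D \<sigma> * of_bool (\<not> \<sigma> i) \<partial>mu' p)"
    using integrable_mu'_h_times[OF of_bool_coord_measurable_F'] int_f1 by simp
  also have "\<dots> = (\<integral>\<sigma>. f \<sigma> \<partial>mu' p)"
  proof (intro Bochner_Integration.integral_cong refl)
    fix \<sigma> assume "\<sigma> \<in> space (mu' p)"
    then have "admissible \<sigma>" by simp
    then have "f \<sigma> = f (extend i \<sigma> (\<sigma> i))"
      by (intro borel_measurable_Fle_determined[OF f(1)]) (simp_all add: extend_self admissible_extend)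
    then show "f1 \<sigma> + ?D \<sigma> * of_bool (\<not> \<sigma> i) = f \<sigma>"
      by (cases "\<sigma> i") (simp_all add: f1_def f0_def)
  qed
  finally show ?thesis .
qed

lemma consistent_LIS_rho: "consistent_LIS (mu' p) (rho p)"
  by (rule consistent_LIS_rhoI[OF _ integral_rho_singleton_mu']) simp_all

end

theorem theorem3p4:
  fixes p :: real
  assumes "0 < p" and "p < 1"
  shows "\<exists>\<rho>. is_LIS \<rho> \<and> transl_inv_LIS \<rho> \<and>
           (\<forall>\<omega> \<in> Omega'.
              measure (\<rho> 0 0 \<omega>) {\<eta> \<in> Omega'. \<not> \<eta> 0} = gp p (nfun \<omega>) \<and>
              measure (\<rho> 0 0 \<omega>) {\<eta> \<in> Omega'. \<eta> 0} = 1 - gp p (nfun \<omega>)) \<and>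
           consistent_LIS (mu' p) \<rho>"
proof -
  interpret bernoulli_param p using assms by unfold_locales
  show ?thesis
    using is_LIS_rho transl_inv_LIS_rho rho_origin consistent_LIS_rho by auto
qed

end
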